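(* Let $T\ge 1$ be an integer and run proximal SGD from a deterministic point $x_0\in\mathbb{R}^n$ with constant step size $\tau = \frac{1}{3L\sqrt{T}}$, i.e. $x_{t+1}=\operatorname{prox}_{\tau g}(x_t-\tau\nabla f_{i_t}(x_t))$ for $t=0,1,\dots,T$. Then \[ \mathbb{E}\left[h(x_{T+1})-h^*\right]\le \frac{9}{\sqrt{T}}\left[L D_*^2+\frac{1}{\sqrt{T}}\bigl(h(x_0)-h^*\bigr)+\frac{\sigma_*^2}{L}\Bigl(\frac{1}{T}+4\ln(T+1)\Bigr)\right]. \]
   Context: Setting. Let $D$ be a probability distribution on an index set, and for each index $i$ let $f_i:\mathbb{R}^n\to\mathbb{R}$ be convex and differentiable with $L$-Lipschitz gradient ($L>0$). Let $f(x)=\mathbb{E}_{i\sim D}[f_i(x)]$, with $\mathbb{E}_{i\sim D}[\nabla f_i(x)]=\nabla f(x)$ for all $x$. Let $g:\mathbb{R}^n\to\mathbb{R}\cup\{+\infty\}$ be proper, convex and lower semicontinuous, and $h=f+g$. Assume the solution set $X^*=\arg\min_x h(x)$ is nonempty, write $h^*=\min h$, $D_*^2=\min_{x^*\in X^*}\|x^*-x_0\|^2$, and assume $\sigma_*^2:=\mathbb{E}_{i\sim D}\|\nabla f_i(x^* )\|^2<\infty$ for some $x^*\in X^*$. For $\tau>0$, $\operatorname{prox}_{\tau g}(y)=\arg\min_z\{\tau g(z)+\tfrac12\|y-z\|^2\}$. The indices $i_0,i_1,\dots$ are drawn i.i.d. from $D$, with $i_t$ independent of $x_0,\dots,x_t$.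 *)

theory Defs
  imports "HOL-Probability.Probability"
begin

text \<open>Proximal operator of the extended-valued function that equals g on its
  (nonempty, convex) effective domain C and +infinity outside C:
  prox_{tau g}(y) = argmin_z { tau g(z) + 1/2 norm(y - z)^2 }.\<close>
definition prox :: "'a::real_inner set \<Rightarrow> ('a \<Rightarrow> real) \<Rightarrow> real \<Rightarrow> 'a \<Rightarrow> 'a" where
  "prox C g \<tau> y = (THE p. p \<in> C \<and>
      (\<forall>z\<in>C. \<tau> * g p + (norm (y - p))\<^sup>2 / 2 \<le> \<tau> * g z + (norm (y - z))\<^sup>2 / 2))"

primrec psgd :: "('a::real_vector \<Rightarrow> 'a) \<Rightarrow> ('i \<Rightarrow> 'a \<Rightarrow> 'a) \<Rightarrow> real \<Rightarrow> 'a \<Rightarrow> (nat \<Rightarrow> 'i) \<Rightarrow> nat \<Rightarrow> 'a" where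
  "psgd P G \<tau> x0 \<omega> 0 = x0"
| "psgd P G \<tau> x0 \<omega> (Suc t) = P (psgd P G \<tau> x0 \<omega> t - \<tau> *\<^sub>R G (\<omega> t) (psgd P G \<tau> x0 \<omega> t))"

end

theory Submission
  imports Defs
begin

(*
  Write gamma = 3 L tau / (2 (1 - tau L)) and beta = 3 tau sigma^2 / (2 (1 - tau L)).
  One step of proximal SGD, combined with the three-point inequality of the prox, the descent
  lemma for F and the cocoercivity of the stochastic gradients, gives for every random point z
  that does not depend on the index drawn in that step
    E[h(x_(t+1)) - h*] + E|x_(t+1) - z|^2 / (2 tau)
      <= E|x_t - z|^2 / (2 tau) + E[h(z) - h*] + gamma E[h(x_t) - h*] + beta.
  Summing with z a minimiser bounds the average of the gaps E[h(x_t) - h*]; summing from t = m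
  with z = x_m bounds their suffix averages. The averages S_k of the last k + 1 gaps then satisfy
  S_k <= (1 + gamma / (k + 1)) S_(k+1) + beta / (k + 2), which unrolls from k = T down to the last
  gap S_0 at the price of a factor exp (gamma H_T) <= exp (gamma (1 + ln T)). For
  tau = 1 / (3 L sqrt T) this factor is at most e and the constants combine to the stated bound.
*)

lemma two_mult_le_weighted_squares:
  fixes a b c :: real
  assumes "c > 0"
  shows "2 * a * b \<le> c * a\<^sup>2 + b\<^sup>2 / c"
proof -
  have "0 \<le> (c * a - b)\<^sup>2 / c"
    using assms by simp
  also have "\<dots> = c * a\<^sup>2 + b\<^sup>2 / c - 2 * a * b"
    using assms by (simp add: power2_eq_square field_simps)
  finally show ?thesis by simp
qed

lemma norm_add_squared_le:
  fixes u v :: "'a::real_normed_vector"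
  assumes "c > 0"
  shows "(norm (u + v))\<^sup>2 \<le> (1 + c) * (norm u)\<^sup>2 + (1 + 1 / c) * (norm v)\<^sup>2"
proof -
  have "(norm (u + v))\<^sup>2 \<le> (norm u + norm v)\<^sup>2"
    by (intro power_mono norm_triangle_ineq) simp
  also have "\<dots> = (norm u)\<^sup>2 + 2 * norm u * norm v + (norm v)\<^sup>2"
    by (simp add: power2_sum)
  also have "\<dots> \<le> (1 + c) * (norm u)\<^sup>2 + (1 + 1 / c) * (norm v)\<^sup>2"
    using two_mult_le_weighted_squares[OF assms, of "norm u" "norm v"] by (simp add: algebra_simps)
  finally show ?thesis .
qed

lemma norm_diff_squared:
  fixes a b :: "'a::real_inner"
  shows "(norm (a - b))\<^sup>2 = (norm a)\<^sup>2 - 2 * (a \<bullet> b) + (norm b)\<^sup>2"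
  by (simp add: power2_norm_eq_inner inner_diff_left inner_diff_right inner_commute)

section \<open>Recursions for real sequences\<close>

lemma harm_le_one_plus_ln: "n \<ge> 1 \<Longrightarrow> (harm n :: real) \<le> 1 + ln (real n)"
  using euler_mascheroni_sequence_decreasing[of 1 n] by (simp add: harm_def)

lemma backward_recursion_bound:
  fixes S :: "nat \<Rightarrow> real" and c s :: real
  assumes c: "c \<ge> 0" and s: "s \<ge> 0" and S: "\<And>k. S k \<ge> 0"
    and rec: "\<And>k. k < T \<Longrightarrow> S k \<le> (1 + c / (k + 1)) * S (Suc k) + s / (k + 2)"
  shows "S 0 \<le> exp (c * harm T) * (S T + s * (harm (Suc T) - 1))"
proof -
  have "S k \<le> exp (c * (harm T - harm k)) * (S T + s * (harm (Suc T) - harm (Suc k)))"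
    if "k \<le> T" for k
    using that
  proof (induction k rule: inc_induct)
    case base
    then show ?case by simp
  next
    case (step k)
    define E where "E = exp (c * (harm T - harm (Suc k)))"
    define B where "B = S T + s * (harm (Suc T) - harm (Suc (Suc k)))"
    have E: "exp (c / (real k + 1)) * E = exp (c * (harm T - harm k))"
    proof -
      have "c / (k + 1) + c * (harm T - harm (Suc k)) = c * (harm T - harm k)"
        by (simp add: harm_Suc[of k] algebra_simps divide_inverse)
      then show ?thesis unfolding E_def by (simp add: exp_add[symmetric] add.commute)
    qed
    have E1: "1 \<le> exp (c * (harm T - harm k))"
      using c harm_mono[of k T] step.hyps by (intro one_le_exp_iff[THEN iffD2] mult_nonneg_nonneg) auto
    have B: "B + s / (k + 2) = S T + s * (harm (Suc T) - harm (Suc k))"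
      unfolding B_def harm_Suc[of "Suc k"] by (simp add: algebra_simps divide_inverse)
    have "S k \<le> (1 + c / (k + 1)) * S (Suc k) + s / (k + 2)"
      using rec step.hyps by simp
    also have "\<dots> \<le> exp (c / (k + 1)) * (E * B) + s / (k + 2)"
      using step.IH S[of "Suc k"] c unfolding E_def B_def
      by (intro add_mono mult_mono) (auto simp: add.commute)
    also have "\<dots> \<le> exp (c * (harm T - harm k)) * B + exp (c * (harm T - harm k)) * (s / (k + 2))"
    proof (rule add_mono)
      show "s / (k + 2) \<le> exp (c * (harm T - harm k)) * (s / (k + 2))"
        using mult_right_mono[OF E1, of "s / (k + 2)"] s by simp
    qed (use E in \<open>simp add: mult.assoc[symmetric] add.commute\<close>)
    also have "\<dots> = exp (c * (harm T - harm k)) * (S T + s * (harm (Suc T) - harm (Suc k)))"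
      by (simp only: B distrib_left[symmetric])
    finally show ?case .
  qed
  from this[of 0] show ?thesis by (simp add: harm_def)
qed

lemma sum_le_head_plus_sum_Suc:
  fixes Q :: "nat \<Rightarrow> real"
  assumes "\<And>t. Q t \<ge> 0" and "m \<le> T"
  shows "(\<Sum>t=m..T. Q t) \<le> Q m + (\<Sum>t=m..T. Q (Suc t))"
proof -
  have "(\<Sum>t=m..T. Q t) = Q m + (\<Sum>t=Suc m..<Suc T. Q t)"
    using assms(2) by (simp add: sum.atLeast_Suc_atMost atLeastLessThanSuc_atLeastAtMost)
  also have "(\<Sum>t=Suc m..<Suc T. Q t) = (\<Sum>t=m..<T. Q (Suc t))"
    by (rule sum.shift_bounds_Suc_ivl)
  also have "\<dots> \<le> (\<Sum>t=m..T. Q (Suc t))"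
    using assms(1) by (intro sum_mono2) auto
  finally show ?thesis by simp
qed

lemma sum_le_telescoping:
  fixes A B R :: "nat \<Rightarrow> real"
  assumes "\<And>t. m \<le> t \<Longrightarrow> t \<le> n \<Longrightarrow> A (Suc t) + B (Suc t) \<le> B t + R t" and "m \<le> Suc n"
  shows "(\<Sum>t=m..n. A (Suc t)) + B (Suc n) \<le> B m + (\<Sum>t=m..n. R t)"
proof -
  have "(\<Sum>t=m..n. A (Suc t)) \<le> (\<Sum>t=m..n. R t - (B (Suc t) - B t))"
    using assms(1) by (intro sum_mono) (simp add: algebra_simps)
  also have "\<dots> = (\<Sum>t=m..n. R t) - (B (Suc n) - B m)"
    using sum_Suc_diff[OF assms(2), of B] by (simp add: sum_subtractf)
  finally show ?thesis by simp
qed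

lemma suffix_mean_step:
  fixes a R q c s :: real
  assumes "a > 0" and "R \<le> a * q + c * (q + R) + a * s"
  shows "R / a \<le> (1 + c / a) * ((R + q) / (a + 1)) + s / (a + 1)"
proof -
  have "(a + 1) * R \<le> (a + c) * (R + q) + a * s"
    using assms(2) by (simp add: algebra_simps)
  have "a + 1 > 0"
    using assms(1) by simp
  have "R / a = (a + 1) * R / ((a + 1) * a)"
    using \<open>a + 1 > 0\<close> by simp
  also have "\<dots> \<le> ((a + c) * (R + q) + a * s) / ((a + 1) * a)"
    using \<open>(a + 1) * R \<le> _\<close> assms(1) \<open>a + 1 > 0\<close> by (intro divide_right_mono) auto
  also have "\<dots> = (1 + c / a) * ((R + q) / (a + 1)) + s / (a + 1)"
  proof -
    have "((a + c) * r + a * s) / (b * a) = (1 + c / a) * (r / b) + s / b" if "b > 0" for b r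
      using that assms(1) by (simp add: field_simps)
    then show ?thesis
      using \<open>a + 1 > 0\<close> by blast
  qed
  finally show ?thesis .
qed

lemma suffix_mean_recursion:
  fixes Q :: "nat \<Rightarrow> real"
  assumes Q: "\<And>t. Q t \<ge> 0" and c: "c \<ge> 0" and k: "k < T"
    and suffix: "(\<Sum>t=T-k..T. Q (Suc t)) \<le> (real k + 1) * Q (T - k) + c * (\<Sum>t=T-k..T. Q t) + (real k + 1) * s"
  shows "(\<Sum>t=T-k..T. Q (Suc t)) / (real k + 1)
    \<le> (1 + c / (real k + 1)) * ((\<Sum>t=T-Suc k..T. Q (Suc t)) / (real k + 2)) + s / (real k + 2)"
proof -
  define m where "m = T - k"
  have "{T - Suc k..T} = insert (m - 1) {m..T}" and "Suc (m - 1) = m"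
    using k unfolding m_def by auto
  then have R_Suc: "(\<Sum>t=T-Suc k..T. Q (Suc t)) = (\<Sum>t=m..T. Q (Suc t)) + Q m"
    unfolding m_def[symmetric] by simp
  have "c * (\<Sum>t=m..T. Q t) \<le> c * (Q m + (\<Sum>t=m..T. Q (Suc t)))"
    using sum_le_head_plus_sum_Suc[OF Q, of m T] c unfolding m_def by (intro mult_left_mono) auto
  then have "(\<Sum>t=m..T. Q (Suc t)) \<le> (real k + 1) * Q m + c * (Q m + (\<Sum>t=m..T. Q (Suc t))) + (real k + 1) * s"
    using suffix unfolding m_def by simp
  from suffix_mean_step[OF _ this] show ?thesis
    unfolding R_Suc m_def by (simp add: add_ac)
qed

lemma sum_Suc_le_of_average_bound:
  fixes Q :: "nat \<Rightarrow> real"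
  assumes Q: "\<And>t. Q t \<ge> 0" and c: "0 \<le> c" "c < 1"
    and average: "(\<Sum>t\<le>T. Q (Suc t)) \<le> A + c * (\<Sum>t\<le>T. Q t) + (real T + 1) * s"
  shows "(\<Sum>t\<le>T. Q (Suc t)) \<le> (A + c * Q 0 + (real T + 1) * s) / (1 - c)"
proof -
  have "c * (\<Sum>t\<le>T. Q t) \<le> c * (Q 0 + (\<Sum>t\<le>T. Q (Suc t)))"
    using sum_le_head_plus_sum_Suc[OF Q, of 0 T] c by (intro mult_left_mono) (auto simp: atLeast0AtMost)
  then have "(\<Sum>t\<le>T. Q (Suc t)) * (1 - c) \<le> A + c * Q 0 + (real T + 1) * s"
    using average by (simp add: algebra_simps)
  then show ?thesis
    using c by (simp add: pos_le_divide_eq)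
qed

lemma last_iterate_bound:
  fixes Q :: "nat \<Rightarrow> real" and A c s :: real
  assumes Q: "\<And>t. Q t \<ge> 0" and c: "0 \<le> c" "c < 1" and s: "s \<ge> 0" and T: "T \<ge> 1"
    and average: "(\<Sum>t\<le>T. Q (Suc t)) \<le> A + c * (\<Sum>t\<le>T. Q t) + (real T + 1) * s"
    and suffix: "\<And>m. 1 \<le> m \<Longrightarrow> m \<le> T \<Longrightarrow>
       (\<Sum>t=m..T. Q (Suc t)) \<le> real (T - m + 1) * Q m + c * (\<Sum>t=m..T. Q t) + real (T - m + 1) * s"
  shows "Q (Suc T) \<le> exp (c * (1 + ln T)) *
    ((A + c * Q 0 + (real T + 1) * s) / ((1 - c) * (real T + 1)) + s * ln (real T + 1))"
proof -
  define S where "S k = (\<Sum>t=T-k..T. Q (Suc t)) / (real k + 1)" for k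
  have S_nonneg: "S k \<ge> 0" for k
    unfolding S_def using Q by (simp add: sum_nonneg)
  have "S k \<le> (1 + c / (k + 1)) * S (Suc k) + s / (k + 2)" if k: "k < T" for k
  proof -
    have "1 \<le> T - k" "T - k \<le> T" "real (T - (T - k) + 1) = real k + 1"
      using k by auto
    from suffix[OF this(1,2)] this(3) have "(\<Sum>t=T-k..T. Q (Suc t))
        \<le> (real k + 1) * Q (T - k) + c * (\<Sum>t=T-k..T. Q t) + (real k + 1) * s"
      by (simp add: add.commute)
    from suffix_mean_recursion[where Q = Q and s = s, OF Q c(1) k this] show ?thesis
      unfolding S_def by (simp add: add_ac)
  qed
  from backward_recursion_bound[OF c(1) s S_nonneg this]
  have "Q (Suc T) \<le> exp (c * harm T) * (S T + s * (harm (Suc T) - 1))"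
    unfolding S_def[of 0] by simp
  also have "\<dots> \<le> exp (c * (1 + ln T)) * ((A + c * Q 0 + (real T + 1) * s) / ((1 - c) * (real T + 1)) + s * ln (real T + 1))"
  proof (rule mult_mono)
    have "(\<Sum>t=T-T..T. Q (Suc t)) = (\<Sum>t\<le>T. Q (Suc t))"
      by (intro sum.cong) auto
    then have "S T \<le> (A + c * Q 0 + (real T + 1) * s) / (1 - c) / (real T + 1)"
      unfolding S_def using sum_Suc_le_of_average_bound[OF Q c average] by (intro divide_right_mono) auto
    moreover have "s * (harm (Suc T) - 1) \<le> s * ln (real T + 1)"
      using harm_le_one_plus_ln[of "Suc T"] s by (intro mult_left_mono) (auto simp: add.commute)
    ultimately show "S T + s * (harm (Suc T) - 1)
        \<le> (A + c * Q 0 + (real T + 1) * s) / ((1 - c) * (real T + 1)) + s * ln (real T + 1)"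
      by (simp add: divide_divide_eq_left)
    show "exp (c * harm T) \<le> exp (c * (1 + ln T))"
      using harm_le_one_plus_ln[OF T] c by (simp add: mult_left_mono)
    have "(harm 1 :: real) \<le> harm (Suc T)"
      by (rule harm_mono) simp
    then show "0 \<le> S T + s * (harm (Suc T) - 1)"
      using S_nonneg[of T] s by (simp add: harm_def)
  qed simp
  finally show ?thesis
    by (simp add: add.commute)
qed

section \<open>Convex minimisation and the proximal operator\<close>

lemma convex_minimizer_variational_inequality:
  fixes u q :: "'a::real_vector \<Rightarrow> real"
  assumes C: "convex C" and u: "convex_on C u" and p: "p \<in> C" and z: "z \<in> C"
    and min: "\<And>w. w \<in> C \<Longrightarrow> u p + q p \<le> u w + q w"
    and q: "\<And>s. 0 < s \<Longrightarrow> s < 1 \<Longrightarrow> q ((1 - s) *\<^sub>R p + s *\<^sub>R z) \<le> q p + s * a + s\<^sup>2 * b"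
  shows "u p \<le> u z + a"
proof -
  have "0 \<le> (u z - u p + a) + s * b" if s: "0 < s" "s < 1" for s
  proof -
    define w where "w = (1 - s) *\<^sub>R p + s *\<^sub>R z"
    have "w \<in> C"
      unfolding w_def using s p z C by (intro convexD) auto
    then have "u p + q p \<le> u w + q w"
      by (rule min)
    also have "u w \<le> (1 - s) * u p + s * u z"
      unfolding w_def using s p z by (intro convex_onD[OF u]) auto
    finally have "0 \<le> s * ((u z - u p + a) + s * b)"
      using q[OF s] unfolding w_def by (simp add: algebra_simps power2_eq_square)
    then show ?thesis
      using s by (simp add: zero_le_mult_iff)
  qed
  then have "\<forall>\<^sub>F s in at_right 0. 0 \<le> (u z - u p + a) + s * b"
    using eventually_at_right_real[of 0 1] by (auto elim: eventually_mono)
  moreover have "((\<lambda>s. (u z - u p + a) + s * b) \<longlongrightarrow> u z - u p + a) (at_right 0)"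
    by (auto intro!: tendsto_eq_intros)
  ultimately have "0 \<le> u z - u p + a"
    by (intro tendsto_lowerbound) auto
  then show ?thesis by simp
qed

lemma closed_epigraph_bdd_below_on_compact:
  fixes g :: "'a::heine_borel \<Rightarrow> real"
  assumes closed: "closed {(x, t). x \<in> C \<and> g x \<le> t}" and K: "compact K"
  shows "\<exists>m. \<forall>x\<in>C \<inter> K. m \<le> g x"
proof (rule ccontr)
  assume "\<not> ?thesis"
  then have unbdd: "\<exists>x\<in>C \<inter> K. g x < m" for m
    by (meson not_le)
  define F where "F n = K \<inter> (\<lambda>x. (x, - real n)) -` {(x, t). x \<in> C \<and> g x \<le> t}" for n :: nat
  have "compact (F n)" for n
    unfolding F_def using K
    by (intro compact_Int_closed continuous_closed_vimage[OF closed]) (auto intro!: continuous_intros)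
  moreover have "F n \<noteq> {}" for n
    using unbdd[of "- real n"] unfolding F_def by force
  moreover have "F n \<subseteq> F m" if "m \<le> n" for m n
    using that unfolding F_def by auto
  ultimately have "\<Inter>(range F) \<noteq> {}"
    by (intro compact_nest) auto
  then obtain x where x: "\<And>n. x \<in> F n"
    by blast
  obtain n :: nat where "- g x < n"
    using reals_Archimedean2 by blast
  with x[of n] show False
    unfolding F_def by auto
qed

lemma convex_on_lower_bound_radial:
  fixes g :: "'a::real_normed_vector \<Rightarrow> real"
  assumes C: "convex C" and g: "convex_on C g" and z: "z \<in> C" and x: "x \<in> C"
    and m: "\<And>w. w \<in> C \<Longrightarrow> norm (w - z) \<le> 1 \<Longrightarrow> m \<le> g w"
  shows "g z - (g z - m) * (1 + norm (x - z)) \<le> g x"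
proof (cases "norm (x - z) \<le> 1")
  case True
  then show ?thesis
    using m[OF x] m[OF z] mult_nonneg_nonneg[of "g z - m" "norm (x - z)"] by (simp add: algebra_simps)
next
  case False
  define r where "r = norm (x - z)"
  have r: "r > 1"
    using False unfolding r_def by simp
  define w where "w = (1 - 1 / r) *\<^sub>R z + (1 / r) *\<^sub>R x"
  have "w - z = (1 / r) *\<^sub>R (x - z)"
    unfolding w_def by (simp add: algebra_simps)
  then have "norm (w - z) = 1"
    using r unfolding r_def by auto
  moreover have "w \<in> C"
    unfolding w_def using r z x C by (intro convexD) auto
  ultimately have "m \<le> g w"
    using m by simp
  also have "g w \<le> (1 - 1 / r) * g z + (1 / r) * g x"
    unfolding w_def using r z x by (intro convex_onD[OF g]) auto
  finally have "r * m \<le> (r - 1) * g z + g x"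
    using r by (simp add: field_simps)
  then show ?thesis
    using m[OF z] unfolding r_def by (simp add: algebra_simps)
qed

locale closed_convex_function =
  fixes C :: "'a::euclidean_space set" and g :: "'a \<Rightarrow> real"
  assumes closed_epigraph: "closed {(x, t). x \<in> C \<and> g x \<le> t}"
    and convex_dom: "convex C" and convex_g: "convex_on C g" and dom_nonempty: "C \<noteq> {}"
begin

lemma cone_lower_bound: "\<exists>a b. 0 \<le> a \<and> (\<forall>x\<in>C. b - a * norm (x - y) \<le> g x)"
proof -
  obtain z where z: "z \<in> C"
    using dom_nonempty by blast
  obtain m where "\<forall>x\<in>C \<inter> cball z 1. m \<le> g x"
    using closed_epigraph_bdd_below_on_compact[OF closed_epigraph, of "cball z 1"] by auto
  then have m: "\<And>w. w \<in> C \<Longrightarrow> norm (w - z) \<le> 1 \<Longrightarrow> m \<le> g w"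
    by (simp add: dist_norm norm_minus_commute)
  define a where "a = g z - m"
  have a: "0 \<le> a"
    unfolding a_def using m[OF z] by simp
  have "g z - a * (1 + norm (x - z)) \<le> g x" if "x \<in> C" for x
    unfolding a_def by (rule convex_on_lower_bound_radial[OF convex_dom convex_g z that m])
  moreover have "a * norm (x - z) \<le> a * norm (y - z) + a * norm (x - y)" for x
    using mult_left_mono[OF norm_triangle_ineq[of "x - y" "y - z"] a] by (simp add: algebra_simps)
  ultimately have "g z - a * (1 + norm (y - z)) - a * norm (x - y) \<le> g x" if "x \<in> C" for x
    using that by (smt (verit) distrib_left)
  with a show ?thesis
    by blast
qed

lemma bounded_prox_sublevel:
  assumes "\<tau> > 0"
  shows "bounded {(x, t). x \<in> C \<and> g x \<le> t \<and> \<tau> * t + (norm (y - x))\<^sup>2 / 2 \<le> c}"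
proof -
  obtain a b where a: "0 \<le> a" and b: "\<And>x. x \<in> C \<Longrightarrow> b - a * norm (x - y) \<le> g x"
    using cone_lower_bound[of y] by blast
  define M where "M = 1 + 4 * (c - \<tau> * b + (\<tau> * a)\<^sup>2)"
  have "norm (x - y) \<le> M \<and> t \<in> {b - a * M..c / \<tau>}"
    if x: "x \<in> C" and t: "g x \<le> t" and sub: "\<tau> * t + (norm (y - x))\<^sup>2 / 2 \<le> c" for x t
  proof -
    define u where "u = norm (x - y)"
    have "\<tau> * (b - a * u) \<le> \<tau> * t"
      using b[OF x] t assms unfolding u_def by simp
    moreover have "2 * (\<tau> * a) * u \<le> 2 * (\<tau> * a)\<^sup>2 + u\<^sup>2 / 2"
      using two_mult_le_weighted_squares[of 2 "\<tau> * a" u] by simp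
    ultimately have u2: "u\<^sup>2 \<le> M - 1"
      using sub unfolding M_def u_def by (simp add: norm_minus_commute algebra_simps)
    have u: "u \<le> M"
    proof (cases "u \<le> 1")
      case True
      then show ?thesis
        using u2 zero_le_power2[of u] by linarith
    next
      case False
      then have "u \<le> u\<^sup>2"
        by (simp add: power2_eq_square)
      then show ?thesis
        using u2 by linarith
    qed
    have "\<tau> * t \<le> c"
      using sub zero_le_power2[of "norm (y - x)"] by linarith
    moreover have "b - a * M \<le> b - a * u"
      using u a by (simp add: mult_left_mono)
    ultimately show ?thesis
      using b[OF x] t assms u unfolding u_def by (simp add: field_simps)
  qed
  then have "{(x, t). x \<in> C \<and> g x \<le> t \<and> \<tau> * t + (norm (y - x))\<^sup>2 / 2 \<le> c}
      \<subseteq> cball y M \<times> {b - a * M..c / \<tau>}"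
    by (auto simp: dist_norm norm_minus_commute)
  then show ?thesis
    by (rule bounded_subset[rotated]) (intro bounded_Times bounded_cball bounded_closed_interval)
qed

lemma prox_minimizer_exists:
  assumes "\<tau> > 0"
  shows "\<exists>p\<in>C. \<forall>z\<in>C. \<tau> * g p + (norm (y - p))\<^sup>2 / 2 \<le> \<tau> * g z + (norm (y - z))\<^sup>2 / 2"
proof -
  \<comment> \<open>minimise the continuous function \<psi> over a compact piece of the closed epigraph\<close>
  define \<psi> where "\<psi> = (\<lambda>(x, t). \<tau> * t + (norm (y - x))\<^sup>2 / 2)"
  obtain z0 where z0: "z0 \<in> C"
    using dom_nonempty by blast
  define W where "W = {(x, t). x \<in> C \<and> g x \<le> t \<and> \<psi> (x, t) \<le> \<psi> (z0, g z0)}"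
  have cont: "continuous_on UNIV \<psi>"
    unfolding \<psi>_def case_prod_unfold by (auto intro!: continuous_intros)
  have "closed W"
  proof -
    have "W = {(x, t). x \<in> C \<and> g x \<le> t} \<inter> {p. \<psi> p \<le> \<psi> (z0, g z0)}"
      unfolding W_def by auto
    then show ?thesis
      using cont by (auto intro!: closed_Int closed_epigraph closed_Collect_le continuous_on_const)
  qed
  moreover have "bounded W"
    using bounded_prox_sublevel[OF assms] unfolding W_def \<psi>_def by simp
  moreover have "(z0, g z0) \<in> W"
    unfolding W_def using z0 by simp
  ultimately obtain pt where pt: "pt \<in> W" and pt_min: "\<And>q. q \<in> W \<Longrightarrow> \<psi> pt \<le> \<psi> q"
    using continuous_attains_inf[of W \<psi>] continuous_on_subset[OF cont] compact_eq_bounded_closed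
    by (metis subset_UNIV empty_iff)
  obtain p t where pt_eq: "pt = (p, t)"
    by fastforce
  have p: "p \<in> C" and "\<psi> (p, g p) \<le> \<psi> pt"
    using pt assms unfolding pt_eq W_def \<psi>_def by auto
  moreover have "\<psi> pt \<le> \<psi> (z, g z)" if "z \<in> C" for z
    using pt_min[of "(z, g z)"] pt that unfolding W_def by (cases "\<psi> (z, g z) \<le> \<psi> (z0, g z0)") auto
  ultimately show ?thesis
    unfolding \<psi>_def by force
qed

lemma prox_minimizer_three_point:
  assumes "\<tau> > 0" and p: "p \<in> C"
    and min: "\<forall>w\<in>C. \<tau> * g p + (norm (y - p))\<^sup>2 / 2 \<le> \<tau> * g w + (norm (y - w))\<^sup>2 / 2"
    and z: "z \<in> C"
  shows "\<tau> * g p + (norm (y - p))\<^sup>2 / 2 + (norm (p - z))\<^sup>2 / 2 \<le> \<tau> * g z + (norm (y - z))\<^sup>2 / 2"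
proof -
  have expand: "(norm (y - ((1 - s) *\<^sub>R p + s *\<^sub>R z)))\<^sup>2 / 2
      = (norm (y - p))\<^sup>2 / 2 + s * - ((y - p) \<bullet> (z - p)) + s\<^sup>2 * ((norm (z - p))\<^sup>2 / 2)" for s
  proof -
    have eq: "y - ((1 - s) *\<^sub>R p + s *\<^sub>R z) = (y - p) - s *\<^sub>R (z - p)"
      by (simp add: algebra_simps)
    show ?thesis
      unfolding eq norm_diff_squared[of "y - p" "s *\<^sub>R (z - p)"]
      by (simp add: power_mult_distrib)
  qed
  have "\<tau> * g p \<le> \<tau> * g z + - ((y - p) \<bullet> (z - p))"
    using assms convex_dom convex_g
    by (intro convex_minimizer_variational_inequality[where q = "\<lambda>w. (norm (y - w))\<^sup>2 / 2"
          and b = "(norm (z - p))\<^sup>2 / 2"])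
       (auto simp: expand)
  moreover have "(norm (y - z))\<^sup>2 = (norm (y - p))\<^sup>2 - 2 * ((y - p) \<bullet> (z - p)) + (norm (z - p))\<^sup>2"
    using norm_diff_squared[of "y - p" "z - p"] by simp
  ultimately show ?thesis
    by (simp add: norm_minus_commute field_simps)
qed

lemma prox_eq:
  assumes "\<tau> > 0" and "p \<in> C"
    and "\<forall>z\<in>C. \<tau> * g p + (norm (y - p))\<^sup>2 / 2 \<le> \<tau> * g z + (norm (y - z))\<^sup>2 / 2"
  shows "prox C g \<tau> y = p"
  unfolding prox_def
proof (rule the_equality)
  fix q
  assume q: "q \<in> C \<and> (\<forall>z\<in>C. \<tau> * g q + (norm (y - q))\<^sup>2 / 2 \<le> \<tau> * g z + (norm (y - z))\<^sup>2 / 2)"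
  then have "\<tau> * g p + (norm (y - p))\<^sup>2 / 2 + (norm (p - q))\<^sup>2 / 2 \<le> \<tau> * g q + (norm (y - q))\<^sup>2 / 2"
    and "\<tau> * g q + (norm (y - q))\<^sup>2 / 2 \<le> \<tau> * g p + (norm (y - p))\<^sup>2 / 2"
    using prox_minimizer_three_point[OF assms, of q] assms(2) by auto
  then have "(norm (p - q))\<^sup>2 \<le> 0"
    by linarith
  then show "q = p"
    by simp
qed (use assms in blast)

lemma prox_mem: "\<tau> > 0 \<Longrightarrow> prox C g \<tau> y \<in> C"
  using prox_minimizer_exists prox_eq by metis

lemma prox_three_point:
  assumes "\<tau> > 0" and "z \<in> C"
  shows "\<tau> * g (prox C g \<tau> y) + (norm (y - prox C g \<tau> y))\<^sup>2 / 2 + (norm (prox C g \<tau> y - z))\<^sup>2 / 2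
    \<le> \<tau> * g z + (norm (y - z))\<^sup>2 / 2"
  using prox_minimizer_exists[OF assms(1)] prox_eq[OF assms(1)] prox_minimizer_three_point[OF assms(1) _ _ assms(2)]
  by metis

lemma prox_nonexpansive:
  assumes "\<tau> > 0"
  shows "norm (prox C g \<tau> y1 - prox C g \<tau> y2) \<le> norm (y1 - y2)"
proof -
  define p1 p2 where "p1 = prox C g \<tau> y1" and "p2 = prox C g \<tau> y2"
  have "(norm (y1 - p2))\<^sup>2 - (norm (y1 - p1))\<^sup>2 + (norm (y2 - p1))\<^sup>2 - (norm (y2 - p2))\<^sup>2
      = 2 * ((y1 - y2) \<bullet> (p1 - p2))"
    by (simp add: norm_diff_squared inner_diff_left inner_diff_right inner_commute algebra_simps)
  then have "(norm (p1 - p2))\<^sup>2 \<le> (y1 - y2) \<bullet> (p1 - p2)"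
    using prox_three_point[OF assms prox_mem[OF assms], of y2 y1] prox_three_point[OF assms prox_mem[OF assms], of y1 y2]
    unfolding p1_def[symmetric] p2_def[symmetric] by (simp add: norm_minus_commute)
  also have "\<dots> \<le> norm (y1 - y2) * norm (p1 - p2)"
    by (rule norm_cauchy_schwarz)
  finally show ?thesis
    unfolding p1_def p2_def by (cases "p1 = p2") (auto simp: power2_eq_square p1_def p2_def)
qed

lemma continuous_on_prox: "\<tau> > 0 \<Longrightarrow> continuous_on UNIV (prox C g \<tau>)"
  by (rule lipschitz_on_continuous_on[of 1]) (auto intro!: lipschitz_onI simp: dist_norm prox_nonexpansive)

end

section \<open>Convex functions with Lipschitz gradient\<close>

lemma convex_on_line:
  fixes \<phi> :: "'a::real_vector \<Rightarrow> real"
  assumes "convex_on UNIV \<phi>"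
  shows "convex_on UNIV (\<lambda>t::real. \<phi> (x + t *\<^sub>R d))"
proof (rule convex_onI)
  fix \<mu> a b :: real
  assume "0 < \<mu>" "\<mu> < 1"
  moreover have "x + ((1 - \<mu>) *\<^sub>R a + \<mu> *\<^sub>R b) *\<^sub>R d = (1 - \<mu>) *\<^sub>R (x + a *\<^sub>R d) + \<mu> *\<^sub>R (x + b *\<^sub>R d)"
    by (simp add: algebra_simps)
  ultimately show "\<phi> (x + ((1 - \<mu>) *\<^sub>R a + \<mu> *\<^sub>R b) *\<^sub>R d) \<le> (1 - \<mu>) * \<phi> (x + a *\<^sub>R d) + \<mu> * \<phi> (x + b *\<^sub>R d)"
    by (simp add: convex_onD[OF assms])
qed simp

locale smooth_function =
  fixes \<phi> :: "'a::real_inner \<Rightarrow> real" and G :: "'a \<Rightarrow> 'a" and L :: real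
  assumes has_derivative_G: "\<And>x. (\<phi> has_derivative (\<lambda>v. G x \<bullet> v)) (at x)"
    and lipschitz_G: "\<And>x y. norm (G x - G y) \<le> L * norm (x - y)"
begin

lemma line_derivative: "((\<lambda>t. \<phi> (x + t *\<^sub>R d)) has_real_derivative G (x + t *\<^sub>R d) \<bullet> d) (at t)"
proof -
  have "((\<lambda>t. \<phi> (x + t *\<^sub>R d)) has_derivative (\<lambda>h. G (x + t *\<^sub>R d) \<bullet> (h *\<^sub>R d))) (at t)"
    by (rule has_derivative_compose[OF _ has_derivative_G]) (auto intro!: derivative_eq_intros)
  then show ?thesis
    unfolding has_field_derivative_def by (rule has_derivative_eq_rhs) (auto simp: fun_eq_iff)
qed

lemma descent_lemma: "\<phi> y \<le> \<phi> x + G x \<bullet> (y - x) + L / 2 * (norm (y - x))\<^sup>2"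
proof -
  define d where "d = y - x"
  define \<psi> where "\<psi> t = \<phi> (x + t *\<^sub>R d) - t * (G x \<bullet> d) - L * t\<^sup>2 / 2 * (norm d)\<^sup>2" for t
  define \<psi>' where "\<psi>' t = (G (x + t *\<^sub>R d) - G x) \<bullet> d - L * t * (norm d)\<^sup>2" for t
  have "(\<psi> has_real_derivative \<psi>' t) (at t)" for t
    unfolding \<psi>_def \<psi>'_def
    by (auto intro!: derivative_eq_intros line_derivative simp: power2_eq_square inner_diff_left)
  then obtain t where t: "0 < t" "t < 1" and "\<psi> 1 - \<psi> 0 = \<psi>' t"
    using MVT2[of 0 1 \<psi> \<psi>'] by auto
  moreover have "(G (x + t *\<^sub>R d) - G x) \<bullet> d \<le> L * t * (norm d)\<^sup>2"
  proof -
    have "(G (x + t *\<^sub>R d) - G x) \<bullet> d \<le> norm (G (x + t *\<^sub>R d) - G x) * norm d"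
      by (rule norm_cauchy_schwarz)
    also have "\<dots> \<le> L * norm (t *\<^sub>R d) * norm d"
      using lipschitz_G[of "x + t *\<^sub>R d" x] by (intro mult_right_mono) auto
    finally show ?thesis
      using t by (simp add: power2_eq_square)
  qed
  ultimately have "\<psi> 1 \<le> \<psi> 0"
    unfolding \<psi>'_def by simp
  then show ?thesis
    unfolding \<psi>_def d_def by simp
qed

lemma above_tangent:
  assumes "convex_on UNIV \<phi>"
  shows "\<phi> x + G x \<bullet> (y - x) \<le> \<phi> y"
  using convex_on_imp_above_tangent[OF convex_on_line[OF assms, of x "y - x"], of 0 1 "G x \<bullet> (y - x)"]
    line_derivative[of x "y - x" 0]
  by (simp add: has_field_derivative_at_within)

lemma gradient_cocoercive:
  assumes "convex_on UNIV \<phi>" and "L > 0"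
  shows "(norm (G x - G y))\<^sup>2 \<le> 2 * L * (\<phi> x - \<phi> y - G y \<bullet> (x - y))"
proof -
  \<comment> \<open>compare the descent step from x with the tangent plane at y\<close>
  define \<delta> where "\<delta> = G x - G y"
  define w where "w = x - (1 / L) *\<^sub>R \<delta>"
  have "\<phi> y + G y \<bullet> (w - y) \<le> \<phi> x + G x \<bullet> (w - x) + L / 2 * (norm (w - x))\<^sup>2"
    using above_tangent[OF assms(1), of y w] descent_lemma[of w x] by linarith
  moreover have "G x \<bullet> (w - x) - G y \<bullet> (w - y) = - G y \<bullet> (x - y) - (1 / L) * (norm \<delta>)\<^sup>2"
    unfolding w_def \<delta>_def by (simp add: inner_diff_left inner_diff_right power2_norm_eq_inner algebra_simps)
  moreover have "L / 2 * (norm (w - x))\<^sup>2 = (1 / (2 * L)) * (norm \<delta>)\<^sup>2"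
    unfolding w_def using assms(2) by (simp add: power2_eq_square)
  ultimately have "(1 / (2 * L)) * (norm \<delta>)\<^sup>2 \<le> \<phi> x - \<phi> y - G y \<bullet> (x - y)"
    by (simp add: algebra_simps)
  then show ?thesis
    unfolding \<delta>_def using assms(2) by (simp add: field_simps)
qed

end

section \<open>Measure-theoretic tools\<close>

definition grid_round :: "nat \<Rightarrow> 'a::euclidean_space \<Rightarrow> 'a" where
  "grid_round n x = (\<Sum>b\<in>Basis. (of_int \<lfloor>real (Suc n) * (x \<bullet> b)\<rfloor> / real (Suc n)) *\<^sub>R b)"

lemma borel_measurable_grid_round [measurable]: "grid_round n \<in> borel_measurable borel"
  unfolding grid_round_def by measurable

lemma countable_range_grid_round: "countable (range (grid_round n :: 'a::euclidean_space \<Rightarrow> 'a))"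
proof (rule countable_subset)
  let ?grid = "(\<lambda>k. \<Sum>b\<in>Basis. (of_int (k b) / real (Suc n)) *\<^sub>R (b::'a)) ` (PiE Basis (\<lambda>_. UNIV :: int set))"
  show "range (grid_round n) \<subseteq> ?grid"
  proof
    fix y :: 'a
    assume "y \<in> range (grid_round n)"
    then obtain x where y: "y = grid_round n x"
      by blast
    have eq: "grid_round n x
        = (\<Sum>b\<in>Basis. (of_int (restrict (\<lambda>b. \<lfloor>real (Suc n) * (x \<bullet> b)\<rfloor>) Basis b) / real (Suc n)) *\<^sub>R b)"
      unfolding grid_round_def by (intro sum.cong) auto
    have "restrict (\<lambda>b. \<lfloor>real (Suc n) * (x \<bullet> b)\<rfloor>) Basis \<in> PiE Basis (\<lambda>_. UNIV)"
      by auto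
    then show "y \<in> ?grid"
      unfolding y eq by (rule image_eqI[OF refl])
  qed
  show "countable ?grid"
    by (intro countable_image countable_PiE) auto
qed

lemma grid_round_tendsto: "(\<lambda>n. grid_round n x) \<longlonglongrightarrow> x"
proof -
  have "norm (grid_round n x - x) \<le> real DIM('a) * inverse (real (Suc n))" for n
  proof -
    have coord: "\<bar>of_int \<lfloor>c * t\<rfloor> / c - t\<bar> \<le> inverse c" if c: "c > 0" for c t :: real
    proof -
      define u where "u = (of_int \<lfloor>c * t\<rfloor> :: real)"
      have "\<bar>u - c * t\<bar> \<le> 1"
        unfolding u_def by linarith
      moreover have "u / c - t = (u - c * t) / c"
        using c by (simp add: field_simps)
      ultimately have "\<bar>u / c - t\<bar> \<le> 1 / c"
        using c by (simp add: divide_right_mono)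
      then show ?thesis
        unfolding u_def by (simp add: divide_inverse)
    qed
    have "grid_round n x - x = (\<Sum>b\<in>Basis. (of_int \<lfloor>real (Suc n) * (x \<bullet> b)\<rfloor> / real (Suc n) - x \<bullet> b) *\<^sub>R b)"
      unfolding grid_round_def
      by (subst (3) euclidean_representation[symmetric]) (simp add: sum_subtractf scaleR_diff_left)
    also have "norm \<dots> \<le> (\<Sum>b\<in>Basis. norm ((of_int \<lfloor>real (Suc n) * (x \<bullet> b)\<rfloor> / real (Suc n) - x \<bullet> b) *\<^sub>R b))"
      by (rule norm_sum)
    also have "\<dots> \<le> (\<Sum>b\<in>(Basis::'a set). inverse (real (Suc n)))"
      using coord[of "real (Suc n)"] by (intro sum_mono) simp
    finally show ?thesis
      by simp
  qed
  then have "(\<lambda>n. grid_round n x - x) \<longlonglongrightarrow> 0"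
    by (rule Lim_null_comparison[OF always_eventually[OF allI]])
       (intro tendsto_mult_right_zero LIMSEQ_inverse_real_of_nat)
  then show ?thesis
    by (rule LIM_zero_cancel)
qed

lemma borel_measurable_caratheodory:
  fixes G :: "'i \<Rightarrow> 'a::euclidean_space \<Rightarrow> 'b::euclidean_space"
  assumes meas: "\<And>x. (\<lambda>i. G i x) \<in> borel_measurable M"
    and cont: "\<And>i. i \<in> space M \<Longrightarrow> continuous_on UNIV (G i)"
  shows "(\<lambda>p. G (fst p) (snd p)) \<in> borel_measurable (M \<Otimes>\<^sub>M borel)"
proof (rule borel_measurable_LIMSEQ_metric)
  fix n
  let ?K = "range (grid_round n :: 'a \<Rightarrow> 'a)"
  show "(\<lambda>p. G (fst p) (grid_round n (snd p))) \<in> borel_measurable (M \<Otimes>\<^sub>M borel)"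
  proof (rule measurable_compose_countable'[where f = "\<lambda>y p. G (fst p) y" and I = ?K])
    show "(\<lambda>p. G (fst p) y) \<in> borel_measurable (M \<Otimes>\<^sub>M borel)" for y
      by (rule measurable_compose[OF measurable_fst meas])
    show "countable ?K"
      by (rule countable_range_grid_round)
    have "(\<lambda>p. grid_round n (snd p)) \<in> borel_measurable (M \<Otimes>\<^sub>M (borel :: 'a measure))"
      by measurable
    then show "(\<lambda>p. grid_round n (snd p)) \<in> measurable (M \<Otimes>\<^sub>M (borel :: 'a measure)) (count_space ?K)"
      unfolding measurable_count_space_eq_countable[OF countable_range_grid_round]
      using measurable_sets[of _ "M \<Otimes>\<^sub>M borel" borel "{_}"] by auto
  qed
next
  fix p :: "'i \<times> 'a"
  assume "p \<in> space (M \<Otimes>\<^sub>M borel)"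
  then have "continuous_on UNIV (G (fst p))"
    by (intro cont) (auto simp: space_pair_measure)
  then show "(\<lambda>n. G (fst p) (grid_round n (snd p))) \<longlonglongrightarrow> G (fst p) (snd p)"
    by (rule continuous_on_tendsto_compose[OF _ grid_round_tendsto]) auto
qed

lemma integrable_norm_squared_add:
  fixes U V :: "'b \<Rightarrow> 'a::euclidean_space"
  assumes [measurable]: "U \<in> borel_measurable M" "V \<in> borel_measurable M"
    and "integrable M (\<lambda>x. (norm (U x))\<^sup>2)" "integrable M (\<lambda>x. (norm (V x))\<^sup>2)"
  shows "integrable M (\<lambda>x. (norm (U x + V x))\<^sup>2)"
proof (rule Bochner_Integration.integrable_bound)
  show "integrable M (\<lambda>x. 2 * (norm (U x))\<^sup>2 + 2 * (norm (V x))\<^sup>2)"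
    using assms(3,4) by simp
  show "AE x in M. norm ((norm (U x + V x))\<^sup>2) \<le> norm (2 * (norm (U x))\<^sup>2 + 2 * (norm (V x))\<^sup>2)"
    by (intro AE_I2) (use norm_add_squared_le[of 1] in simp)
qed measurable

lemma (in prob_space) integral_norm_centered_squared_le:
  fixes V :: "'a \<Rightarrow> 'b::euclidean_space"
  assumes "integrable M V" and "integrable M (\<lambda>x. (norm (V x))\<^sup>2)"
  shows "(\<integral>x. (norm (V x - expectation V))\<^sup>2 \<partial>M) \<le> (\<integral>x. (norm (V x))\<^sup>2 \<partial>M)"
proof -
  have "(\<integral>x. (norm (V x - expectation V))\<^sup>2 \<partial>M)
      = (\<integral>x. (norm (V x))\<^sup>2 - 2 * (V x \<bullet> expectation V) + (norm (expectation V))\<^sup>2 \<partial>M)"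
    by (simp add: norm_diff_squared)
  also have "\<dots> = (\<integral>x. (norm (V x))\<^sup>2 \<partial>M) - (norm (expectation V))\<^sup>2"
    using assms by (simp add: integral_add integral_diff prob_space power2_norm_eq_inner)
  finally show ?thesis
    by simp
qed

lemma nn_integral_PiM_fresh_coordinate_le:
  fixes D :: "'i measure" and \<Phi> :: "'i \<Rightarrow> 'b \<Rightarrow> ennreal" and \<psi> :: "(nat \<Rightarrow> 'i) \<Rightarrow> 'b"
  assumes D: "prob_space D" and t: "t \<le> T"
    and meas: "(\<lambda>w. \<Phi> (w t) (\<psi> w)) \<in> borel_measurable (PiM {..T} (\<lambda>_. D))"
      "(\<lambda>w. R (\<psi> w)) \<in> borel_measurable (PiM {..T} (\<lambda>_. D))"
    and fresh: "\<And>w y. w \<in> space (PiM {..T} (\<lambda>_. D)) \<Longrightarrow> y \<in> space D \<Longrightarrow> \<psi> (w(t := y)) = \<psi> w"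
    and bound: "\<And>w. w \<in> space (PiM {..T} (\<lambda>_. D)) \<Longrightarrow> (\<integral>\<^sup>+y. \<Phi> y (\<psi> w) \<partial>D) \<le> R (\<psi> w)"
  shows "(\<integral>\<^sup>+w. \<Phi> (w t) (\<psi> w) \<partial>PiM {..T} (\<lambda>_. D)) \<le> (\<integral>\<^sup>+w. R (\<psi> w) \<partial>PiM {..T} (\<lambda>_. D))"
proof -
  interpret product_sigma_finite "\<lambda>_. D"
    using prob_space_imp_sigma_finite[OF D] by (simp add: product_sigma_finite_def)
  interpret D: prob_space D
    by (rule D)
  define I where "I = {..T} - {t}"
  have TI: "{..T} = insert t I" and I: "finite I" "t \<notin> I"
    unfolding I_def using t by auto
  obtain y0 where y0: "y0 \<in> space D"
    using D.not_empty by blast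
  have upd: "x(t := y) \<in> space (PiM {..T} (\<lambda>_. D))" if "x \<in> space (PiM I (\<lambda>_. D))" "y \<in> space D" for x y
    using that unfolding TI space_PiM by (intro PiE_fun_upd) auto
  have \<psi>_upd: "\<psi> (x(t := y)) = \<psi> (x(t := y0))" if "x \<in> space (PiM I (\<lambda>_. D))" "y \<in> space D" for x y
    using fresh[OF upd[OF that(1) y0] that(2)] by simp
  have "(\<integral>\<^sup>+w. \<Phi> (w t) (\<psi> w) \<partial>PiM {..T} (\<lambda>_. D))
      = (\<integral>\<^sup>+x. (\<integral>\<^sup>+y. \<Phi> ((x(t := y)) t) (\<psi> (x(t := y))) \<partial>D) \<partial>PiM I (\<lambda>_. D))"
    using product_nn_integral_insert[OF I, of "\<lambda>w. \<Phi> (w t) (\<psi> w)"] meas(1) unfolding TI by simp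
  also have "\<dots> = (\<integral>\<^sup>+x. (\<integral>\<^sup>+y. \<Phi> y (\<psi> (x(t := y0))) \<partial>D) \<partial>PiM I (\<lambda>_. D))"
    by (intro nn_integral_cong) (simp add: \<psi>_upd)
  also have "\<dots> \<le> (\<integral>\<^sup>+x. (\<integral>\<^sup>+y. R (\<psi> (x(t := y0))) \<partial>D) \<partial>PiM I (\<lambda>_. D))"
    by (rule nn_integral_mono) (simp add: D.emeasure_space_1 bound upd y0)
  also have "\<dots> = (\<integral>\<^sup>+x. (\<integral>\<^sup>+y. R (\<psi> (x(t := y))) \<partial>D) \<partial>PiM I (\<lambda>_. D))"
    by (intro nn_integral_cong) (simp add: \<psi>_upd)
  also have "\<dots> = (\<integral>\<^sup>+w. R (\<psi> w) \<partial>PiM {..T} (\<lambda>_. D))"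
    using product_nn_integral_insert[OF I, of "\<lambda>w. R (\<psi> w)"] meas(2) unfolding TI by simp
  finally show ?thesis .
qed

section \<open>One step of proximal SGD\<close>

locale prox_sgd_problem =
  fixes D :: "'i measure"
    and f :: "'i \<Rightarrow> 'a::euclidean_space \<Rightarrow> real"
    and G :: "'i \<Rightarrow> 'a \<Rightarrow> 'a"
    and C :: "'a set" and g :: "'a \<Rightarrow> real"
    and L :: real and xs :: 'a
  assumes D: "prob_space D"
    and L: "L > 0"
    and f_convex: "\<And>i. i \<in> space D \<Longrightarrow> convex_on UNIV (f i)"
    and f_grad: "\<And>i x. i \<in> space D \<Longrightarrow> (f i has_derivative (\<lambda>v. G i x \<bullet> v)) (at x)"
    and f_lip: "\<And>i x y. i \<in> space D \<Longrightarrow> norm (G i x - G i y) \<le> L * norm (x - y)"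
    and f_int: "\<And>x. integrable D (\<lambda>i. f i x)"
    and G_int: "\<And>x. integrable D (\<lambda>i. G i x)"
    and F_grad: "\<And>x. ((\<lambda>y. \<integral>i. f i y \<partial>D) has_derivative (\<lambda>v. (\<integral>i. G i x \<partial>D) \<bullet> v)) (at x)"
    and C_ne: "C \<noteq> {}" and C_convex: "convex C" and g_convex: "convex_on C g"
    and g_lsc: "closed {(x, t). x \<in> C \<and> g x \<le> t}"
    and xs_C: "xs \<in> C"
    and xs_min: "\<forall>y\<in>C. (\<integral>i. f i xs \<partial>D) + g xs \<le> (\<integral>i. f i y \<partial>D) + g y"
    and sigma_fin: "integrable D (\<lambda>i. (norm (G i xs))\<^sup>2)"
begin

sublocale D: prob_space D
  by (rule D)

sublocale closed_convex_function C g
  using g_lsc C_convex g_convex C_ne by unfold_locales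

definition "F x = (\<integral>i. f i x \<partial>D)"
definition "grad_F x = (\<integral>i. G i x \<partial>D)"
definition "h x = F x + g x"
definition "h_min = h xs"
definition "\<sigma>2 = (\<integral>i. (norm (G i xs))\<^sup>2 \<partial>D)"
definition "bregman x = F x - F xs - grad_F xs \<bullet> (x - xs)"

lemma smooth_function_f: "i \<in> space D \<Longrightarrow> smooth_function (f i) (G i) L"
  by unfold_locales (auto intro: f_grad f_lip)

lemma borel_measurable_G [measurable]: "(\<lambda>i. G i x) \<in> borel_measurable D"
  using G_int by (rule borel_measurable_integrable)

lemma borel_measurable_f [measurable]: "(\<lambda>i. f i x) \<in> borel_measurable D"
  using f_int by (rule borel_measurable_integrable)

lemma integrable_inner_G [simp]: "integrable D (\<lambda>i. G i x \<bullet> v)"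
  using G_int by (rule integrable_inner_left)

lemma integrable_gradient_diff_squared: "integrable D (\<lambda>i. (norm (G i x - G i y))\<^sup>2)"
proof (rule Bochner_Integration.integrable_bound)
  show "integrable D (\<lambda>_. (L * norm (x - y))\<^sup>2)"
    by simp
  show "AE i in D. norm ((norm (G i x - G i y))\<^sup>2) \<le> norm ((L * norm (x - y))\<^sup>2)"
    using f_lip by (auto intro!: AE_I2 power_mono)
qed measurable

lemma integrable_gradient_squared: "integrable D (\<lambda>i. (norm (G i x))\<^sup>2)"
  using integrable_norm_squared_add[OF _ _ integrable_gradient_diff_squared[of x xs] sigma_fin] by simp

lemma integrable_shifted_squared:
  fixes V :: "'i \<Rightarrow> 'a"
  assumes [measurable]: "V \<in> borel_measurable D" and "integrable D (\<lambda>i. (norm (V i))\<^sup>2)"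
  shows "integrable D (\<lambda>i. (norm (V i + v))\<^sup>2)"
  using integrable_norm_squared_add[of V D "\<lambda>_. v"] assms by simp

lemma integrable_gradient_noise_squared: "integrable D (\<lambda>i. (norm (grad_F x - G i x))\<^sup>2)"
  using integrable_shifted_squared[of "\<lambda>i. - G i x" "grad_F x"] integrable_gradient_squared[of x] by simp

lemma integral_gradient_noise_inner: "(\<integral>i. (grad_F x - G i x) \<bullet> v \<partial>D) = 0"
proof -
  have "(\<integral>i. (grad_F x - G i x) \<bullet> v \<partial>D) = (\<integral>i. grad_F x - G i x \<partial>D) \<bullet> v"
    using G_int by (intro integral_inner_left) auto
  also have "(\<integral>i. grad_F x - G i x \<partial>D) = 0"
    unfolding grad_F_def using G_int by (simp add: D.prob_space)
  finally show ?thesis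
    by simp
qed

lemma F_descent: "F y \<le> F x + grad_F x \<bullet> (y - x) + L / 2 * (norm (y - x))\<^sup>2"
proof -
  have "F y \<le> (\<integral>i. f i x + G i x \<bullet> (y - x) + L / 2 * (norm (y - x))\<^sup>2 \<partial>D)"
    unfolding F_def using f_int
    by (intro integral_mono smooth_function.descent_lemma[OF smooth_function_f]) auto
  also have "\<dots> = F x + grad_F x \<bullet> (y - x) + L / 2 * (norm (y - x))\<^sup>2"
    unfolding F_def grad_F_def using f_int G_int by (simp add: D.prob_space)
  finally show ?thesis .
qed

lemma F_above_tangent: "F x + grad_F x \<bullet> (y - x) \<le> F y"
proof -
  have "F x + grad_F x \<bullet> (y - x) = (\<integral>i. f i x + G i x \<bullet> (y - x) \<partial>D)"
    unfolding F_def grad_F_def using f_int G_int by simp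
  also have "\<dots> \<le> F y"
    unfolding F_def using f_int
    by (intro integral_mono smooth_function.above_tangent[OF smooth_function_f] f_convex) auto
  finally show ?thesis .
qed

lemma h_min_le: "x \<in> C \<Longrightarrow> h_min \<le> h x"
  using xs_min unfolding h_def h_min_def F_def by auto

lemma bregman_le: 
  assumes "x \<in> C"
  shows "bregman x \<le> h x - h_min"
proof -
  have "g xs \<le> g x + grad_F xs \<bullet> (x - xs)"
  proof (rule convex_minimizer_variational_inequality[OF C_convex g_convex xs_C assms, where q = F])
    show "g xs + F xs \<le> g w + F w" if "w \<in> C" for w
      using xs_min that unfolding F_def by (simp add: add.commute)
    show "F ((1 - s) *\<^sub>R xs + s *\<^sub>R x) \<le> F xs + s * (grad_F xs \<bullet> (x - xs)) + s\<^sup>2 * (L / 2 * (norm (x - xs))\<^sup>2)"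
      for s
    proof -
      have "(1 - s) *\<^sub>R xs + s *\<^sub>R x - xs = s *\<^sub>R (x - xs)"
        by (simp add: algebra_simps)
      then show ?thesis
        using F_descent[of "(1 - s) *\<^sub>R xs + s *\<^sub>R x" xs] by (simp add: power_mult_distrib mult_ac)
    qed
  qed
  then show ?thesis
    unfolding bregman_def h_def h_min_def by simp
qed

lemma integral_gradient_diff_squared_le: "(\<integral>i. (norm (G i x - G i xs))\<^sup>2 \<partial>D) \<le> 2 * L * bregman x"
proof -
  have "(\<integral>i. (norm (G i x - G i xs))\<^sup>2 \<partial>D) \<le> (\<integral>i. 2 * L * (f i x - f i xs - G i xs \<bullet> (x - xs)) \<partial>D)"
    using integrable_gradient_diff_squared f_int L
    by (intro integral_mono smooth_function.gradient_cocoercive[OF smooth_function_f] f_convex) auto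
  also have "\<dots> = 2 * L * bregman x"
    unfolding bregman_def F_def grad_F_def using f_int G_int by simp
  finally show ?thesis .
qed

lemma gradient_noise_le: "(\<integral>i. (norm (grad_F x - G i x))\<^sup>2 \<partial>D) \<le> 3 * L * bregman x + 3 * \<sigma>2"
proof -
  define A where "A i = G i x - G i xs" for i
  define B where "B i = G i xs" for i
  have [measurable]: "A \<in> borel_measurable D" "B \<in> borel_measurable D"
    unfolding A_def B_def by measurable
  have A_int: "integrable D A" and B_int: "integrable D B"
    unfolding A_def B_def using G_int by auto
  have A2_int: "integrable D (\<lambda>i. (norm (A i))\<^sup>2)" and B2_int: "integrable D (\<lambda>i. (norm (B i))\<^sup>2)"
    unfolding A_def B_def by (rule integrable_gradient_diff_squared sigma_fin)+
  have EA: "D.expectation A = grad_F x - grad_F xs" and EB: "D.expectation B = grad_F xs"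
    unfolding A_def B_def grad_F_def using G_int by auto
  have "(norm (grad_F x - G i x))\<^sup>2
      \<le> 3 / 2 * (norm (A i - D.expectation A))\<^sup>2 + 3 * (norm (B i - D.expectation B))\<^sup>2" for i
  proof -
    have "grad_F x - G i x = - (A i - D.expectation A) + - (B i - D.expectation B)"
      unfolding EA EB unfolding A_def B_def by simp
    then show ?thesis
      using norm_add_squared_le[of "1 / 2" "- (A i - D.expectation A)" "- (B i - D.expectation B)"]
      by (simp add: norm_minus_commute)
  qed
  moreover have "integrable D (\<lambda>i. (norm (A i - D.expectation A))\<^sup>2)"
    and "integrable D (\<lambda>i. (norm (B i - D.expectation B))\<^sup>2)"
    using integrable_shifted_squared[OF _ A2_int, of "- D.expectation A"]
      integrable_shifted_squared[OF _ B2_int, of "- D.expectation B"]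
    by simp_all
  ultimately have "(\<integral>i. (norm (grad_F x - G i x))\<^sup>2 \<partial>D)
      \<le> (\<integral>i. 3 / 2 * (norm (A i - D.expectation A))\<^sup>2 + 3 * (norm (B i - D.expectation B))\<^sup>2 \<partial>D)"
    using integrable_gradient_noise_squared by (intro integral_mono) auto
  also have "\<dots> = 3 / 2 * (\<integral>i. (norm (A i - D.expectation A))\<^sup>2 \<partial>D)
      + 3 * (\<integral>i. (norm (B i - D.expectation B))\<^sup>2 \<partial>D)"
    using \<open>integrable D (\<lambda>i. (norm (A i - D.expectation A))\<^sup>2)\<close>
      \<open>integrable D (\<lambda>i. (norm (B i - D.expectation B))\<^sup>2)\<close>
    by simp
  also have "\<dots> \<le> 3 / 2 * (2 * L * bregman x) + 3 * \<sigma>2"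
  proof (intro add_mono mult_left_mono)
    show "(\<integral>i. (norm (A i - D.expectation A))\<^sup>2 \<partial>D) \<le> 2 * L * bregman x"
      using D.integral_norm_centered_squared_le[OF A_int A2_int] integral_gradient_diff_squared_le[of x]
      unfolding A_def by linarith
    show "(\<integral>i. (norm (B i - D.expectation B))\<^sup>2 \<partial>D) \<le> \<sigma>2"
      using D.integral_norm_centered_squared_le[OF B_int B2_int] unfolding B_def \<sigma>2_def .
  qed auto
  finally show ?thesis
    by simp
qed

lemma inexact_prox_gradient_step:
  fixes x v :: 'a
  assumes \<tau>: "\<tau> > 0" and z: "z \<in> C"
  defines "p \<equiv> prox C g \<tau> (x - \<tau> *\<^sub>R v)"
  shows "\<tau> * (h p - h z) \<le> (norm (x - z))\<^sup>2 / 2 - (norm (p - z))\<^sup>2 / 2 - (1 - \<tau> * L) / 2 * (norm (p - x))\<^sup>2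
    + \<tau> * ((grad_F x - v) \<bullet> (p - z))"
proof -
  have "\<tau> * g p + (norm (x - \<tau> *\<^sub>R v - p))\<^sup>2 / 2 + (norm (p - z))\<^sup>2 / 2
      \<le> \<tau> * g z + (norm (x - \<tau> *\<^sub>R v - z))\<^sup>2 / 2"
    unfolding p_def using prox_three_point[OF \<tau> z] .
  moreover have "(norm (x - \<tau> *\<^sub>R v - z))\<^sup>2 / 2 - (norm (x - \<tau> *\<^sub>R v - p))\<^sup>2 / 2
      = (norm (x - z))\<^sup>2 / 2 - (norm (p - x))\<^sup>2 / 2 + \<tau> * (v \<bullet> (z - p))"
    by (simp add: power2_norm_eq_inner inner_diff_left inner_diff_right inner_commute algebra_simps)
      (simp add: field_simps)
  moreover have "F p - F z \<le> grad_F x \<bullet> (p - z) + L / 2 * (norm (p - x))\<^sup>2"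
    using F_descent[of p x] F_above_tangent[of x z] by (simp add: inner_diff_right)
  then have "\<tau> * (F p - F z) \<le> \<tau> * (grad_F x \<bullet> (p - z) + L / 2 * (norm (p - x))\<^sup>2)"
    using \<tau> by (intro mult_left_mono) auto
  then have "\<tau> * F p - \<tau> * F z \<le> \<tau> * (grad_F x \<bullet> (p - z)) + \<tau> * L / 2 * (norm (p - x))\<^sup>2"
    by (simp add: algebra_simps)
  moreover have "\<tau> * ((grad_F x - v) \<bullet> (p - z)) = \<tau> * (grad_F x \<bullet> (p - z)) + \<tau> * (v \<bullet> (z - p))"
    by (simp add: inner_diff_left inner_diff_right algebra_simps)
  moreover have "\<tau> * (h p - h z) = \<tau> * F p + \<tau> * g p - \<tau> * F z - \<tau> * g z"
    unfolding h_def by (simp add: algebra_simps)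
  moreover have "(1 - \<tau> * L) / 2 * (norm (p - x))\<^sup>2 = (norm (p - x))\<^sup>2 / 2 - \<tau> * L / 2 * (norm (p - x))\<^sup>2"
    by (simp add: field_simps)
  ultimately show ?thesis
    by linarith
qed

lemma prox_sgd_step:
  fixes x :: 'a and i :: 'i
  assumes \<tau>: "\<tau> > 0" "\<tau> * L < 1" and z: "z \<in> C"
  defines "p \<equiv> prox C g \<tau> (x - \<tau> *\<^sub>R G i x)" and "e \<equiv> grad_F x - G i x"
  shows "h p - h_min + 1 / (2 * \<tau>) * (norm (p - z))\<^sup>2
    \<le> 1 / (2 * \<tau>) * (norm (x - z))\<^sup>2 + (h z - h_min) + e \<bullet> (x - z) + \<tau> / (2 * (1 - \<tau> * L)) * (norm e)\<^sup>2"
proof -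
  define c where "c = 1 - \<tau> * L"
  have c: "c > 0"
    unfolding c_def using \<tau> by simp
  have "\<tau> * (e \<bullet> (p - x)) \<le> \<tau> * norm e * norm (p - x)"
    using mult_left_mono[OF norm_cauchy_schwarz[of e "p - x"], of \<tau>] \<tau> by (simp add: mult.assoc)
  also have "\<dots> \<le> \<tau>\<^sup>2 / (2 * c) * (norm e)\<^sup>2 + c / 2 * (norm (p - x))\<^sup>2"
    using two_mult_le_weighted_squares[of "1 / c" "\<tau> * norm e" "norm (p - x)"] c
    by (simp add: power_mult_distrib field_simps)
  finally have "\<tau> * (e \<bullet> (p - x)) \<le> \<tau>\<^sup>2 / (2 * c) * (norm e)\<^sup>2 + c / 2 * (norm (p - x))\<^sup>2" .
  moreover have "\<tau> * (e \<bullet> (p - z)) = \<tau> * (e \<bullet> (x - z)) + \<tau> * (e \<bullet> (p - x))"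
    by (simp add: inner_diff_right algebra_simps)
  ultimately have "\<tau> * (h p - h z) \<le> (norm (x - z))\<^sup>2 / 2 - (norm (p - z))\<^sup>2 / 2
      + \<tau> * (e \<bullet> (x - z)) + \<tau>\<^sup>2 / (2 * c) * (norm e)\<^sup>2"
    using inexact_prox_gradient_step[OF \<tau>(1) z, of x "G i x"] unfolding p_def[symmetric] e_def[symmetric] c_def
    by linarith
  then have "h p - h z \<le> ((norm (x - z))\<^sup>2 / 2 - (norm (p - z))\<^sup>2 / 2
      + \<tau> * (e \<bullet> (x - z)) + \<tau>\<^sup>2 / (2 * c) * (norm e)\<^sup>2) / \<tau>"
    using \<tau>(1) by (simp add: pos_le_divide_eq mult.commute)
  also have "\<dots> = 1 / (2 * \<tau>) * (norm (x - z))\<^sup>2 - 1 / (2 * \<tau>) * (norm (p - z))\<^sup>2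
      + e \<bullet> (x - z) + \<tau> / (2 * c) * (norm e)\<^sup>2"
    using \<tau>(1) c by (simp add: field_simps power2_eq_square)
  finally show ?thesis
    unfolding c_def by simp
qed

lemma expected_prox_sgd_step:
  assumes \<tau>: "\<tau> > 0" "\<tau> * L < 1" and x: "x \<in> C" and z: "z \<in> C"
  defines "\<kappa> \<equiv> \<tau> / (2 * (1 - \<tau> * L))"
  shows "(\<integral>\<^sup>+i. ennreal (h (prox C g \<tau> (x - \<tau> *\<^sub>R G i x)) - h_min
            + 1 / (2 * \<tau>) * (norm (prox C g \<tau> (x - \<tau> *\<^sub>R G i x) - z))\<^sup>2) \<partial>D)
    \<le> ennreal (1 / (2 * \<tau>) * (norm (x - z))\<^sup>2 + (h z - h_min) + 3 * L * \<kappa> * (h x - h_min) + 3 * \<kappa> * \<sigma>2)"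
proof -
  have \<kappa>: "\<kappa> \<ge> 0"
    unfolding \<kappa>_def using \<tau> by simp
  define P where "P i = prox C g \<tau> (x - \<tau> *\<^sub>R G i x)" for i
  define R where "R i = 1 / (2 * \<tau>) * (norm (x - z))\<^sup>2 + (h z - h_min) + (grad_F x - G i x) \<bullet> (x - z)
      + \<kappa> * (norm (grad_F x - G i x))\<^sup>2" for i
  have P_nonneg: "0 \<le> h (P i) - h_min + 1 / (2 * \<tau>) * (norm (P i - z))\<^sup>2" for i
    using h_min_le[OF prox_mem[OF \<tau>(1)]] \<tau> unfolding P_def by simp
  have P_le: "h (P i) - h_min + 1 / (2 * \<tau>) * (norm (P i - z))\<^sup>2 \<le> R i" for i
    unfolding P_def R_def \<kappa>_def by (rule prox_sgd_step[OF \<tau> z])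
  have "integrable D R"
    unfolding R_def using G_int integrable_gradient_noise_squared by (simp add: inner_diff_left)
  then have "(\<integral>\<^sup>+i. ennreal (R i) \<partial>D) = ennreal (\<integral>i. R i \<partial>D)"
    using P_le P_nonneg by (intro nn_integral_eq_integral) (auto intro!: AE_I2 order_trans[OF P_nonneg])
  moreover have "(\<integral>i. R i \<partial>D) = 1 / (2 * \<tau>) * (norm (x - z))\<^sup>2 + (h z - h_min)
      + \<kappa> * (\<integral>i. (norm (grad_F x - G i x))\<^sup>2 \<partial>D)"
    unfolding R_def using G_int integrable_gradient_noise_squared integral_gradient_noise_inner
    by (simp add: D.prob_space inner_diff_left)
  moreover have "\<kappa> * (\<integral>i. (norm (grad_F x - G i x))\<^sup>2 \<partial>D) \<le> \<kappa> * (3 * L * (h x - h_min) + 3 * \<sigma>2)"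
  proof (rule mult_left_mono[OF _ \<kappa>])
    have "3 * L * bregman x \<le> 3 * L * (h x - h_min)"
      using bregman_le[OF x] L by simp
    then show "(\<integral>i. (norm (grad_F x - G i x))\<^sup>2 \<partial>D) \<le> 3 * L * (h x - h_min) + 3 * \<sigma>2"
      using gradient_noise_le[of x] by linarith
  qed
  ultimately have "(\<integral>\<^sup>+i. ennreal (R i) \<partial>D)
      \<le> ennreal (1 / (2 * \<tau>) * (norm (x - z))\<^sup>2 + (h z - h_min) + 3 * L * \<kappa> * (h x - h_min) + 3 * \<kappa> * \<sigma>2)"
    by (simp add: algebra_simps ennreal_leI)
  moreover have "(\<integral>\<^sup>+i. ennreal (h (P i) - h_min + 1 / (2 * \<tau>) * (norm (P i - z))\<^sup>2) \<partial>D)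
      \<le> (\<integral>\<^sup>+i. ennreal (R i) \<partial>D)"
    using P_le by (intro nn_integral_mono ennreal_leI) auto
  ultimately show ?thesis
    unfolding P_def by simp
qed

end

section \<open>The iterates in expectation\<close>

lemma ennreal_recursion_step_real:
  fixes a1 b1 b0 e a0 :: ennreal and \<rho> \<gamma> \<beta> :: real
  assumes le: "a1 + ennreal \<rho> * b1 \<le> ennreal \<rho> * b0 + e + ennreal \<gamma> * a0 + ennreal \<beta>"
    and finite: "b0 < top" "e < top" "a0 < top" and coeffs: "\<rho> > 0" "\<gamma> \<ge> 0" "\<beta> \<ge> 0"
  shows "a1 < top" "b1 < top"
    and "enn2real a1 + \<rho> * enn2real b1 \<le> \<rho> * enn2real b0 + enn2real e + \<gamma> * enn2real a0 + \<beta>"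
proof -
  obtain B0 where B0: "B0 \<ge> 0" "b0 = ennreal B0"
    using finite(1) less_top_ennreal by blast
  obtain E where E: "E \<ge> 0" "e = ennreal E"
    using finite(2) less_top_ennreal by blast
  obtain A0 where A0: "A0 \<ge> 0" "a0 = ennreal A0"
    using finite(3) less_top_ennreal by blast
  define S where "S = \<rho> * B0 + E + \<gamma> * A0 + \<beta>"
  have "S \<ge> 0"
    unfolding S_def using B0 E A0 coeffs by simp
  have le_S: "a1 + ennreal \<rho> * b1 \<le> ennreal S"
    using le B0 E A0 coeffs unfolding S_def by (simp add: ennreal_plus ennreal_mult)
  then have "a1 + ennreal \<rho> * b1 < top"
    using le_less_trans ennreal_less_top by blast
  then have a1: "a1 < top" and "ennreal \<rho> * b1 < top"
    by (auto simp: top_unique)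
  then have b1: "b1 < top"
    using coeffs by (auto simp: ennreal_mult_less_top)
  show "a1 < top" "b1 < top"
    by (fact a1 b1)+
  obtain A1 where A1: "A1 \<ge> 0" "a1 = ennreal A1"
    using a1 less_top_ennreal by blast
  obtain B1 where B1: "B1 \<ge> 0" "b1 = ennreal B1"
    using b1 less_top_ennreal by blast
  have "ennreal (A1 + \<rho> * B1) \<le> ennreal S"
    using le_S A1 B1 coeffs by (simp add: ennreal_plus ennreal_mult)
  then have "A1 + \<rho> * B1 \<le> S"
    using \<open>S \<ge> 0\<close> by simp
  then show "enn2real a1 + \<rho> * enn2real b1 \<le> \<rho> * enn2real b0 + enn2real e + \<gamma> * enn2real a0 + \<beta>"
    using A1 B1 B0 E A0 unfolding S_def by simp
qed

locale prox_sgd_run = prox_sgd_problem +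
  fixes \<tau> :: real and x0 and T :: nat
  assumes \<tau>_pos: "\<tau> > 0" and \<tau>_L: "\<tau> * L < 1" and x0_C: "x0 \<in> C"
begin

abbreviation "\<Omega> \<equiv> PiM {..T} (\<lambda>_. D)"

sublocale \<Omega>: prob_space \<Omega>
  by (intro prob_space_PiM) (use D in auto)

definition "X t w = psgd (prox C g \<tau>) G \<tau> x0 w t"

lemma X_0: "X 0 w = x0"
  unfolding X_def by simp

lemma X_Suc: "X (Suc t) w = prox C g \<tau> (X t w - \<tau> *\<^sub>R G (w t) (X t w))"
  unfolding X_def by simp

lemma X_mem: "X t w \<in> C"
  by (cases t) (simp_all add: X_0 x0_C X_Suc prox_mem[OF \<tau>_pos])

lemma X_fun_upd: "t \<le> s \<Longrightarrow> X t (w(s := y)) = X t w"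
  by (induction t) (simp_all add: X_0 X_Suc)

lemma borel_measurable_G_uncurry [measurable]: "(\<lambda>p. G (fst p) (snd p)) \<in> borel_measurable (D \<Otimes>\<^sub>M borel)"
proof (rule borel_measurable_caratheodory)
  show "continuous_on UNIV (G i)" if "i \<in> space D" for i
    using f_lip[OF that] L
    by (intro lipschitz_on_continuous_on[of L]) (auto intro!: lipschitz_onI simp: dist_norm)
qed measurable

lemma borel_measurable_X [measurable]: "t \<le> Suc T \<Longrightarrow> X t \<in> borel_measurable \<Omega>"
proof (induction t)
  case (Suc t)
  then have [measurable]: "X t \<in> borel_measurable \<Omega>" and t: "t \<in> {..T}"
    by simp_all
  have "(\<lambda>w. (w t, X t w)) \<in> measurable \<Omega> (D \<Otimes>\<^sub>M borel)"
    using measurable_component_singleton[OF t, of "\<lambda>_. D"] by measurable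
  from measurable_compose[OF this borel_measurable_G_uncurry]
  have [measurable]: "(\<lambda>w. G (w t) (X t w)) \<in> borel_measurable \<Omega>"
    by simp
  have [measurable]: "prox C g \<tau> \<in> borel_measurable borel"
    by (rule borel_measurable_continuous_onI[OF continuous_on_prox[OF \<tau>_pos]])
  show ?case
    unfolding X_Suc[abs_def] by measurable
qed (simp add: X_def[abs_def])

lemma borel_measurable_h:
  assumes [measurable]: "Y \<in> borel_measurable M" and Y: "\<And>w. w \<in> space M \<Longrightarrow> Y w \<in> C"
  shows "(\<lambda>w. h (Y w)) \<in> borel_measurable M"
proof -
  have "continuous_on UNIV F"
    unfolding F_def by (intro continuous_at_imp_continuous_on ballI has_derivative_continuous[OF F_grad])
  then have [measurable]: "F \<in> borel_measurable borel"
    by (rule borel_measurable_continuous_onI)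
  have [measurable]: "(\<lambda>w. g (Y w)) \<in> borel_measurable M"
  proof (rule borel_measurableI_le)
    fix a :: real
    have "closed ((\<lambda>x. (x, a)) -` {(x, t). x \<in> C \<and> g x \<le> t})"
      by (rule continuous_closed_vimage[OF g_lsc]) (auto intro!: continuous_intros)
    then have "Y -` ((\<lambda>x. (x, a)) -` {(x, t). x \<in> C \<and> g x \<le> t}) \<inter> space M \<in> sets M"
      by (intro measurable_sets[OF assms(1)]) auto
    moreover have "{w \<in> space M. g (Y w) \<le> a} = Y -` ((\<lambda>x. (x, a)) -` {(x, t). x \<in> C \<and> g x \<le> t}) \<inter> space M"
      using Y by auto
    ultimately show "{w \<in> space M. g (Y w) \<le> a} \<in> sets M"
      by simp
  qed
  show ?thesis
    unfolding h_def by measurable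
qed

lemma borel_measurable_h_X [measurable]: "t \<le> Suc T \<Longrightarrow> (\<lambda>w. h (X t w)) \<in> borel_measurable \<Omega>"
  by (rule borel_measurable_h) (auto simp: X_mem)

definition "\<kappa> = \<tau> / (2 * (1 - \<tau> * L))"
definition "\<rho> = 1 / (2 * \<tau>)"
definition "\<gamma> = 3 * L * \<kappa>"
definition "\<beta> = 3 * \<kappa> * \<sigma>2"

lemma \<kappa>_nonneg: "\<kappa> \<ge> 0"
  unfolding \<kappa>_def using \<tau>_pos \<tau>_L by simp

lemma \<rho>_pos: "\<rho> > 0"
  unfolding \<rho>_def using \<tau>_pos by simp

lemma \<gamma>_nonneg: "\<gamma> \<ge> 0"
  unfolding \<gamma>_def using \<kappa>_nonneg L by simp

lemma \<beta>_nonneg: "\<beta> \<ge> 0"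
  unfolding \<beta>_def \<sigma>2_def using \<kappa>_nonneg by simp

definition "expected_gap Y = (\<integral>\<^sup>+w. ennreal (h (Y w) - h_min) \<partial>\<Omega>)"
definition "expected_sqdist Y Z = (\<integral>\<^sup>+w. ennreal ((norm (Y w - Z w))\<^sup>2) \<partial>\<Omega>)"

lemma expected_step_integrals:
  assumes t: "t \<le> T" and [measurable]: "Z \<in> borel_measurable \<Omega>" and Z: "\<And>w. Z w \<in> C"
    and Z_fresh: "\<And>w y. Z (w(t := y)) = Z w"
  shows "(\<integral>\<^sup>+w. ennreal (h (X (Suc t) w) - h_min + \<rho> * (norm (X (Suc t) w - Z w))\<^sup>2) \<partial>\<Omega>)
    \<le> (\<integral>\<^sup>+w. ennreal (\<rho> * (norm (X t w - Z w))\<^sup>2 + (h (Z w) - h_min) + \<gamma> * (h (X t w) - h_min) + \<beta>) \<partial>\<Omega>)"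
proof -
  define \<Phi> where "\<Phi> y p = ennreal (h (prox C g \<tau> (fst p - \<tau> *\<^sub>R G y (fst p))) - h_min
      + \<rho> * (norm (prox C g \<tau> (fst p - \<tau> *\<^sub>R G y (fst p)) - snd p))\<^sup>2)" for y p
  define \<psi> where "\<psi> w = (X t w, Z w)" for w
  define R where "R p = ennreal (\<rho> * (norm (fst p - snd p))\<^sup>2 + (h (snd p) - h_min) + \<gamma> * (h (fst p) - h_min) + \<beta>)"
    for p
  have \<Phi>_eq: "(\<lambda>w. \<Phi> (w t) (\<psi> w)) = (\<lambda>w. ennreal (h (X (Suc t) w) - h_min + \<rho> * (norm (X (Suc t) w - Z w))\<^sup>2))"
    unfolding \<Phi>_def \<psi>_def by (simp add: X_Suc)
  have R_eq: "(\<lambda>w. R (\<psi> w)) = (\<lambda>w. ennreal (\<rho> * (norm (X t w - Z w))\<^sup>2 + (h (Z w) - h_min) + \<gamma> * (h (X t w) - h_min) + \<beta>))"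
    unfolding R_def \<psi>_def by simp
  have [measurable]: "(\<lambda>w. h (Z w)) \<in> borel_measurable \<Omega>"
    using Z by (intro borel_measurable_h) auto
  have "Suc t \<le> Suc T" "t \<le> Suc T"
    using t by simp_all
  have "(\<integral>\<^sup>+w. \<Phi> (w t) (\<psi> w) \<partial>\<Omega>) \<le> (\<integral>\<^sup>+w. R (\<psi> w) \<partial>\<Omega>)"
  proof (rule nn_integral_PiM_fresh_coordinate_le[OF D t])
    show "(\<lambda>w. \<Phi> (w t) (\<psi> w)) \<in> borel_measurable \<Omega>" "(\<lambda>w. R (\<psi> w)) \<in> borel_measurable \<Omega>"
      unfolding \<Phi>_eq R_eq using \<open>Suc t \<le> Suc T\<close> \<open>t \<le> Suc T\<close> by measurable
    show "\<psi> (w(t := y)) = \<psi> w" for w y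
      unfolding \<psi>_def by (simp add: X_fun_upd Z_fresh)
    show "(\<integral>\<^sup>+y. \<Phi> y (\<psi> w) \<partial>D) \<le> R (\<psi> w)" for w
      unfolding \<Phi>_def \<psi>_def R_def \<rho>_def \<gamma>_def \<beta>_def \<kappa>_def
      using expected_prox_sgd_step[OF \<tau>_pos \<tau>_L X_mem Z, of t w w] by (simp add: mult.assoc)
  qed
  then show ?thesis
    unfolding \<Phi>_eq R_eq .
qed

lemma expected_step:
  assumes t: "t \<le> T" and [measurable]: "Z \<in> borel_measurable \<Omega>" and Z: "\<And>w. Z w \<in> C"
    and Z_fresh: "\<And>w y. Z (w(t := y)) = Z w"
  shows "expected_gap (X (Suc t)) + ennreal \<rho> * expected_sqdist (X (Suc t)) Z
    \<le> ennreal \<rho> * expected_sqdist (X t) Z + expected_gap Z + ennreal \<gamma> * expected_gap (X t) + ennreal \<beta>"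
proof -
  have [measurable]: "(\<lambda>w. h (Z w)) \<in> borel_measurable \<Omega>"
    using Z by (intro borel_measurable_h) auto
  have "Suc t \<le> Suc T" "t \<le> Suc T"
    using t by simp_all
  have gap_nonneg: "h (Y w) - h_min \<ge> 0" if "\<And>w. Y w \<in> C" for Y w
    using h_min_le that by simp
  have "expected_gap (X (Suc t)) + ennreal \<rho> * expected_sqdist (X (Suc t)) Z
      = (\<integral>\<^sup>+w. ennreal (h (X (Suc t) w) - h_min + \<rho> * (norm (X (Suc t) w - Z w))\<^sup>2) \<partial>\<Omega>)"
    unfolding expected_gap_def expected_sqdist_def
    using gap_nonneg[of "X (Suc t)"] X_mem \<rho>_pos \<open>Suc t \<le> Suc T\<close>
    by (simp add: nn_integral_add nn_integral_cmult ennreal_plus ennreal_mult)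
  also have "\<dots> \<le> (\<integral>\<^sup>+w. ennreal (\<rho> * (norm (X t w - Z w))\<^sup>2 + (h (Z w) - h_min) + \<gamma> * (h (X t w) - h_min) + \<beta>) \<partial>\<Omega>)"
    by (rule expected_step_integrals[OF t _ Z Z_fresh]) measurable
  also have "\<dots> = ennreal \<rho> * expected_sqdist (X t) Z + expected_gap Z + ennreal \<gamma> * expected_gap (X t) + ennreal \<beta>"
    unfolding expected_gap_def expected_sqdist_def
    using gap_nonneg[of Z] gap_nonneg[of "X t"] Z X_mem \<rho>_pos \<gamma>_nonneg \<beta>_nonneg \<open>t \<le> Suc T\<close>
    by (simp add: nn_integral_add nn_integral_cmult ennreal_plus ennreal_mult \<Omega>.emeasure_space_1)
  finally show ?thesis .
qed

lemma expected_gap_minimizer: "xh \<in> C \<Longrightarrow> h xh = h_min \<Longrightarrow> expected_gap (\<lambda>_. xh) = 0"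
  unfolding expected_gap_def by simp

lemma expected_sqdist_const: "expected_sqdist (X 0) (\<lambda>_. z) = ennreal ((norm (x0 - z))\<^sup>2)"
  unfolding expected_sqdist_def by (simp add: X_0 \<Omega>.emeasure_space_1)

lemma expected_gap_X_0: "expected_gap (X 0) = ennreal (h x0 - h_min)"
  unfolding expected_gap_def by (simp add: X_0 \<Omega>.emeasure_space_1)

lemma expected_gap_finite: "t \<le> Suc T \<Longrightarrow> expected_gap (X t) < top \<and> expected_sqdist (X t) (\<lambda>_. xs) < top"
proof (induction t)
  case 0
  then show ?case
    by (simp add: expected_gap_X_0 expected_sqdist_const)
next
  case (Suc t)
  then have t: "t \<le> T" and IH: "expected_gap (X t) < top" "expected_sqdist (X t) (\<lambda>_. xs) < top"
    by auto
  have "expected_gap (X (Suc t)) + ennreal \<rho> * expected_sqdist (X (Suc t)) (\<lambda>_. xs)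
      \<le> ennreal \<rho> * expected_sqdist (X t) (\<lambda>_. xs) + expected_gap (\<lambda>_. xs) + ennreal \<gamma> * expected_gap (X t) + ennreal \<beta>"
    by (rule expected_step[OF t]) (auto simp: xs_C)
  from ennreal_recursion_step_real(1,2)[OF this IH(2) _ IH(1) \<rho>_pos \<gamma>_nonneg \<beta>_nonneg]
  show ?case
    using expected_gap_minimizer[OF xs_C] h_min_def by simp
qed

lemma expected_sqdist_finite:
  assumes t: "t \<le> Suc T" and [measurable]: "Z \<in> borel_measurable \<Omega>"
    and Z: "(\<integral>\<^sup>+w. ennreal ((norm (Z w - xs))\<^sup>2) \<partial>\<Omega>) < top"
  shows "expected_sqdist (X t) Z < top"
proof -
  have [measurable]: "X t \<in> borel_measurable \<Omega>"
    using t by simp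
  have "expected_sqdist (X t) Z
      \<le> (\<integral>\<^sup>+w. ennreal 2 * ennreal ((norm (X t w - xs))\<^sup>2) + ennreal 2 * ennreal ((norm (Z w - xs))\<^sup>2) \<partial>\<Omega>)"
    unfolding expected_sqdist_def
  proof (intro nn_integral_mono)
    fix w
    have "(norm ((X t w - xs) + (xs - Z w)))\<^sup>2 \<le> 2 * (norm (X t w - xs))\<^sup>2 + 2 * (norm (xs - Z w))\<^sup>2"
      using norm_add_squared_le[of 1 "X t w - xs" "xs - Z w"] by simp
    then have "ennreal ((norm (X t w - Z w))\<^sup>2) \<le> ennreal (2 * (norm (X t w - xs))\<^sup>2 + 2 * (norm (Z w - xs))\<^sup>2)"
      by (intro ennreal_leI) (simp add: norm_minus_commute)
    also have "\<dots> = ennreal 2 * ennreal ((norm (X t w - xs))\<^sup>2) + ennreal 2 * ennreal ((norm (Z w - xs))\<^sup>2)"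
      by (simp add: ennreal_plus ennreal_mult)
    finally show "ennreal ((norm (X t w - Z w))\<^sup>2)
        \<le> ennreal 2 * ennreal ((norm (X t w - xs))\<^sup>2) + ennreal 2 * ennreal ((norm (Z w - xs))\<^sup>2)" .
  qed
  also have "\<dots> = ennreal 2 * expected_sqdist (X t) (\<lambda>_. xs) + ennreal 2 * (\<integral>\<^sup>+w. ennreal ((norm (Z w - xs))\<^sup>2) \<partial>\<Omega>)"
    unfolding expected_sqdist_def by (simp add: nn_integral_add nn_integral_cmult)
  also have "\<dots> < top"
    using expected_gap_finite[OF t] Z by (simp add: ennreal_mult_less_top)
  finally show ?thesis .
qed

text \<open>enn2real sends top to 0; lemma expected_gap_finite shows this junk value never occurs.\<close>
definition "mean_gap t = enn2real (expected_gap (X t))"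

lemma mean_gap_nonneg: "mean_gap t \<ge> 0"
  unfolding mean_gap_def by simp

lemma expected_step_real:
  assumes t: "t \<le> T" and [measurable]: "Z \<in> borel_measurable \<Omega>" and Z: "\<And>w. Z w \<in> C"
    and Z_fresh: "\<And>w y. Z (w(t := y)) = Z w"
    and Z_finite: "(\<integral>\<^sup>+w. ennreal ((norm (Z w - xs))\<^sup>2) \<partial>\<Omega>) < top" "expected_gap Z < top"
  shows "mean_gap (Suc t) + \<rho> * enn2real (expected_sqdist (X (Suc t)) Z)
    \<le> \<rho> * enn2real (expected_sqdist (X t) Z) + enn2real (expected_gap Z) + \<gamma> * mean_gap t + \<beta>"
  using ennreal_recursion_step_real(3)[OF expected_step[OF t _ Z Z_fresh]
      expected_sqdist_finite[OF _ _ Z_finite(1)] Z_finite(2) conjunct1[OF expected_gap_finite] \<rho>_pos \<gamma>_nonneg \<beta>_nonneg]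
    t
  unfolding mean_gap_def by simp

lemma average_bound:
  assumes "xh \<in> C" "h xh = h_min"
  shows "(\<Sum>t\<le>T. mean_gap (Suc t)) \<le> \<rho> * (norm (x0 - xh))\<^sup>2 + \<gamma> * (\<Sum>t\<le>T. mean_gap t) + (real T + 1) * \<beta>"
proof -
  define B where "B t = \<rho> * enn2real (expected_sqdist (X t) (\<lambda>_. xh))" for t
  have "mean_gap (Suc t) + B (Suc t) \<le> B t + (\<gamma> * mean_gap t + \<beta>)" if "t \<le> T" for t
    using expected_step_real[OF that, of "\<lambda>_. xh"] expected_gap_minimizer[OF assms] assms(1)
    unfolding B_def by (simp add: \<Omega>.emeasure_space_1)
  then have "(\<Sum>t=0..T. mean_gap (Suc t)) + B (Suc T) \<le> B 0 + (\<Sum>t=0..T. \<gamma> * mean_gap t + \<beta>)"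
    by (intro sum_le_telescoping) auto
  moreover have "B (Suc T) \<ge> 0"
    unfolding B_def using \<rho>_pos by simp
  moreover have "B 0 = \<rho> * (norm (x0 - xh))\<^sup>2"
    unfolding B_def expected_sqdist_const by simp
  ultimately show ?thesis
    by (simp add: sum.distrib sum_distrib_left atLeast0AtMost add.commute)
qed

lemma suffix_bound:
  assumes m: "m \<le> T"
  shows "(\<Sum>t=m..T. mean_gap (Suc t))
    \<le> real (T - m + 1) * mean_gap m + \<gamma> * (\<Sum>t=m..T. mean_gap t) + real (T - m + 1) * \<beta>"
proof -
  define B where "B t = \<rho> * enn2real (expected_sqdist (X t) (X m))" for t
  have "m \<le> Suc T"
    using m by simp
  have "mean_gap (Suc t) + B (Suc t) \<le> B t + (mean_gap m + \<gamma> * mean_gap t + \<beta>)" if "m \<le> t" "t \<le> T" for t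
  proof -
    have "mean_gap (Suc t) + B (Suc t) \<le> B t + enn2real (expected_gap (X m)) + \<gamma> * mean_gap t + \<beta>"
      unfolding B_def
    proof (rule expected_step_real[OF that(2)])
      show "X m (w(t := y)) = X m w" for w y
        using that by (simp add: X_fun_upd)
      show "(\<integral>\<^sup>+w. ennreal ((norm (X m w - xs))\<^sup>2) \<partial>\<Omega>) < top" "expected_gap (X m) < top"
        using expected_gap_finite[OF \<open>m \<le> Suc T\<close>] unfolding expected_sqdist_def by simp_all
    qed (use \<open>m \<le> Suc T\<close> X_mem in simp_all)
    then show ?thesis
      unfolding mean_gap_def by simp
  qed
  then have "(\<Sum>t=m..T. mean_gap (Suc t)) + B (Suc T) \<le> B m + (\<Sum>t=m..T. mean_gap m + \<gamma> * mean_gap t + \<beta>)"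
    using m by (intro sum_le_telescoping) auto
  moreover have "B (Suc T) \<ge> 0"
    unfolding B_def using \<rho>_pos by simp
  moreover have "B m = 0"
    unfolding B_def expected_sqdist_def by simp
  ultimately show ?thesis
    using m by (simp add: sum.distrib sum_distrib_left algebra_simps)
qed

lemma last_iterate_mean_gap:
  assumes "T \<ge> 1" "\<gamma> < 1" and "xh \<in> C" "h xh = h_min"
  shows "mean_gap (Suc T) \<le> exp (\<gamma> * (1 + ln T)) *
    ((\<rho> * (norm (x0 - xh))\<^sup>2 + \<gamma> * mean_gap 0 + (real T + 1) * \<beta>) / ((1 - \<gamma>) * (real T + 1))
      + \<beta> * ln (real T + 1))"
  using last_iterate_bound[OF mean_gap_nonneg \<gamma>_nonneg assms(2) \<beta>_nonneg assms(1) average_bound[OF assms(3,4)]]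
    suffix_bound by simp

lemma expected_gap_eq_mean_gap: "t \<le> Suc T \<Longrightarrow> expected_gap (X t) = ennreal (mean_gap t)"
  using expected_gap_finite[of t] unfolding mean_gap_def by (simp add: less_top[symmetric])

end

section \<open>The step size 1 / (3 L sqrt T)\<close>

lemma exp_tuned_le_3:
  fixes r :: real
  assumes "r \<ge> 1"
  shows "exp (3 / (2 * (3 * r - 1)) * (1 + ln (r\<^sup>2))) \<le> 3"
proof -
  have "1 + ln (r\<^sup>2) \<le> 2 * r - 1"
    using ln_le_minus_one[of r] assms by (simp add: ln_realpow)
  then have "3 / (2 * (3 * r - 1)) * (1 + ln (r\<^sup>2)) \<le> 3 / (2 * (3 * r - 1)) * (2 * r - 1)"
    using assms by (intro mult_left_mono) auto
  also have "\<dots> \<le> 1"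
    using assms by (simp add: field_simps)
  finally show ?thesis
    using exp_le by (smt (verit) exp_mono)
qed

lemma tuned_normaliser_le:
  fixes r :: real
  assumes r: "r \<ge> 1"
  shows "1 / ((1 - 3 / (2 * (3 * r - 1))) * (r\<^sup>2 + 1)) \<le> 2 / r\<^sup>2"
proof -
  have "(6 * r - 5) * (r\<^sup>2 + 1) - r\<^sup>2 * (3 * r - 1) = (r - 1) * (3 * r\<^sup>2 - r + 5)"
    by (simp add: power2_eq_square algebra_simps)
  also have "\<dots> \<ge> 0"
    using r by (intro mult_nonneg_nonneg) (auto simp: power2_eq_square intro: order_trans[of _ r])
  finally have "r\<^sup>2 * (3 * r - 1) / (2 * (3 * r - 1)) \<le> (6 * r - 5) * (r\<^sup>2 + 1) / (2 * (3 * r - 1))"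
    using r by (intro divide_right_mono) auto
  moreover have "r\<^sup>2 * (3 * r - 1) / (2 * (3 * r - 1)) = r\<^sup>2 / 2"
    using r by (simp add: field_simps)
  moreover have "(6 * r - 5) * (r\<^sup>2 + 1) / (2 * (3 * r - 1)) = (1 - 3 / (2 * (3 * r - 1))) * (r\<^sup>2 + 1)"
    using r by (simp add: field_simps)
  ultimately have "r\<^sup>2 / 2 \<le> (1 - 3 / (2 * (3 * r - 1))) * (r\<^sup>2 + 1)"
    by linarith
  moreover have "1 - 3 / (2 * (3 * r - 1)) > 0"
    using r by (simp add: field_simps)
  ultimately have "1 / ((1 - 3 / (2 * (3 * r - 1))) * (r\<^sup>2 + 1)) \<le> 1 / (r\<^sup>2 / 2)"
    using r by (intro divide_left_mono) (auto intro!: mult_pos_pos add_pos_nonneg)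
  then show ?thesis
    by simp
qed

lemma tuned_step_size_bound:
  fixes r L d q \<sigma> l :: real
  assumes r: "r \<ge> 1" and L: "L > 0" and d: "d \<ge> 0" and q: "q \<ge> 0" and \<sigma>: "\<sigma> \<ge> 0" and l: "l \<ge> 2 / 3"
  defines "\<gamma> \<equiv> 3 / (2 * (3 * r - 1))" and "\<beta> \<equiv> 3 * \<sigma> / (2 * L * (3 * r - 1))"
  shows "exp (\<gamma> * (1 + ln (r\<^sup>2))) * ((3 * L * r / 2 * d + \<gamma> * q + (r\<^sup>2 + 1) * \<beta>) / ((1 - \<gamma>) * (r\<^sup>2 + 1)) + \<beta> * l)
    \<le> 9 / r * (L * d + 1 / r * q + \<sigma> / L * (1 / r\<^sup>2 + 4 * l))"
proof -
  define K where "K = 1 / ((1 - \<gamma>) * (r\<^sup>2 + 1))"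
  have r0: "r > 0" and r2: "2 * r \<le> 3 * r - 1"
    using r by auto
  have \<gamma>: "0 \<le> \<gamma>" "\<gamma> \<le> 3 / (4 * r)" "\<gamma> \<le> 3 / 4"
    unfolding \<gamma>_def using r r2 by (auto simp: field_simps)
  have \<beta>: "0 \<le> \<beta>" "\<beta> \<le> 3 * \<sigma> / (4 * L * r)"
    unfolding \<beta>_def using r r2 L \<sigma> by (auto intro!: divide_left_mono)
  have K: "0 \<le> K" "K \<le> 2 / r\<^sup>2"
    unfolding K_def using \<gamma>(3) tuned_normaliser_le[OF r] unfolding \<gamma>_def by simp_all
  have "(3 * L * r / 2 * d + \<gamma> * q + (r\<^sup>2 + 1) * \<beta>) / ((1 - \<gamma>) * (r\<^sup>2 + 1)) + \<beta> * l
      = 3 * L * r / 2 * d * K + \<gamma> * q * K + (\<beta> / (1 - \<gamma>) + \<beta> * l)"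
    unfolding K_def using \<gamma>(3) add_pos_nonneg[of 1 "r\<^sup>2"] by (simp add: add_divide_distrib)
  also have "\<dots> \<le> 3 * L * d / r + 3 * q / r\<^sup>2 + 12 * \<sigma> * l / (L * r)"
  proof (intro add_mono)
    have "3 * L * r / 2 * d * K \<le> 3 * L * r / 2 * d * (2 / r\<^sup>2)"
      using K L r0 d by (intro mult_left_mono) auto
    then show "3 * L * r / 2 * d * K \<le> 3 * L * d / r"
      using r0 by (simp add: power2_eq_square)
    have "\<gamma> * q * K \<le> 3 / (4 * r) * q * (2 / r\<^sup>2)"
      using K \<gamma> q r0 by (intro mult_mono) auto
    also have "\<dots> \<le> 3 * q / r\<^sup>2"
      using r q mult_left_mono[of 1 "r * 2" q] by (simp add: field_simps)
    finally show "\<gamma> * q * K \<le> 3 * q / r\<^sup>2" .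
    have "\<beta> / (1 - \<gamma>) + \<beta> * l \<le> (4 + l) * \<beta>"
      using \<beta> \<gamma>(3) mult_left_mono[of "\<gamma> * 4" 3 \<beta>] by (simp add: field_simps)
    also have "\<dots> \<le> (4 + l) * (3 * \<sigma> / (4 * L * r))"
      using \<beta> l by (intro mult_left_mono) auto
    also have "\<dots> \<le> 12 * \<sigma> * l / (L * r)"
      using mult_left_mono[of "4 * r" "15 * l * r" \<sigma>] mult_right_mono[of 4 "15 * l" r] l L r0 \<sigma>
      by (simp add: field_simps)
    finally show "\<beta> / (1 - \<gamma>) + \<beta> * l \<le> 12 * \<sigma> * l / (L * r)" .
  qed
  also have "\<dots> \<le> 3 / r * (L * d + 1 / r * q + \<sigma> / L * (1 / r\<^sup>2 + 4 * l))"
  proof -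
    have "3 / r * (L * d + 1 / r * q + \<sigma> / L * (1 / r\<^sup>2 + 4 * l))
        = 3 * L * d / r + 3 * q / r\<^sup>2 + 12 * \<sigma> * l / (L * r) + 3 * \<sigma> / (L * r ^ 3)"
      using r0 L by (simp add: field_simps power2_eq_square power3_eq_cube)
    then show ?thesis
      using \<sigma> L r0 by simp
  qed
  finally have "(3 * L * r / 2 * d + \<gamma> * q + (r\<^sup>2 + 1) * \<beta>) / ((1 - \<gamma>) * (r\<^sup>2 + 1)) + \<beta> * l
      \<le> 3 / r * (L * d + 1 / r * q + \<sigma> / L * (1 / r\<^sup>2 + 4 * l))" .
  moreover have "0 \<le> (3 * L * r / 2 * d + \<gamma> * q + (r\<^sup>2 + 1) * \<beta>) / ((1 - \<gamma>) * (r\<^sup>2 + 1)) + \<beta> * l"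
    using L r0 d q \<gamma> \<beta> l by simp
  ultimately show ?thesis
    using mult_mono[OF exp_tuned_le_3[OF r]] unfolding \<gamma>_def by fastforce
qed

lemma le_affine_INF:
  fixes \<phi> :: "'a \<Rightarrow> real"
  assumes "M \<noteq> {}" and "b > 0" and "\<And>x. x \<in> M \<Longrightarrow> q \<le> a + b * \<phi> x"
  shows "q \<le> a + b * (INF x\<in>M. \<phi> x)"
proof -
  have "(q - a) / b \<le> (INF x\<in>M. \<phi> x)"
    using assms by (intro cINF_greatest) (auto simp: field_simps)
  then show ?thesis
    using assms(2) by (simp add: field_simps)
qed

locale prox_sgd_tuned = prox_sgd_problem +
  fixes x0 and T :: nat
  assumes x0_mem: "x0 \<in> C" and T_ge_1: "T \<ge> 1"
begin

sublocale prox_sgd_run D f G C g L xs "1 / (3 * L * sqrt (real T))" x0 T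
proof
  have "1 < 3 * sqrt (real T)"
    using T_ge_1 by (smt (verit) of_nat_1 of_nat_mono real_sqrt_ge_one)
  moreover have "1 / (3 * L * sqrt (real T)) * L = 1 / (3 * sqrt (real T))"
    using L by simp
  ultimately show "1 / (3 * L * sqrt (real T)) * L < 1"
    by (simp add: divide_less_eq)
qed (use L T_ge_1 x0_mem in auto)

lemma tuned_constants:
  "\<rho> = 3 * L * sqrt (real T) / 2" "\<gamma> = 3 / (2 * (3 * sqrt (real T) - 1))"
  "\<beta> = 3 * \<sigma>2 / (2 * L * (3 * sqrt (real T) - 1))"
proof -
  have pos: "3 * sqrt (real T) - 1 > 0"
    using T_ge_1 by (smt (verit) of_nat_1 of_nat_mono real_sqrt_ge_one)
  then have "\<kappa> = 1 / (2 * L * (3 * sqrt (real T) - 1))"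
    unfolding \<kappa>_def using L T_ge_1 by (simp add: field_simps)
  with pos L show "\<rho> = 3 * L * sqrt (real T) / 2" "\<gamma> = 3 / (2 * (3 * sqrt (real T) - 1))"
    "\<beta> = 3 * \<sigma>2 / (2 * L * (3 * sqrt (real T) - 1))"
    unfolding \<rho>_def \<gamma>_def \<beta>_def by (simp_all add: field_simps)
qed

lemma mean_gap_last_le:
  assumes x: "x \<in> C" "h x = h_min"
  shows "mean_gap (Suc T) \<le> 9 / sqrt (real T) * (L * (norm (x - x0))\<^sup>2
    + 1 / sqrt (real T) * (h x0 - h_min) + \<sigma>2 / L * (1 / real T + 4 * ln (real T + 1)))"
proof -
  have r: "sqrt (real T) \<ge> 1"
    using T_ge_1 by simp
  have "\<gamma> < 1"
  proof -
    \<comment> \<open>naming sqrt T stops simp from turning 1 \<le> sqrt T back into 1 \<le> T\<close>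
    define s where "s = sqrt (real T)"
    have "3 < 2 * (3 * s - 1)"
      using r unfolding s_def[symmetric] by (simp add: algebra_simps)
    then show ?thesis
      unfolding tuned_constants(2) unfolding s_def[symmetric] by (simp add: divide_less_eq)
  qed
  have "2 / 3 \<le> ln (real T + 1)"
    using ln2_ge_two_thirds T_ge_1 by (smt (verit) ln_le_cancel_iff of_nat_1 of_nat_mono)
  have "mean_gap (Suc T) \<le> exp (\<gamma> * (1 + ln (real T))) *
      ((\<rho> * (norm (x - x0))\<^sup>2 + \<gamma> * (h x0 - h_min) + (real T + 1) * \<beta>)
        / ((1 - \<gamma>) * (real T + 1)) + \<beta> * ln (real T + 1))"
    using last_iterate_mean_gap[OF T_ge_1 \<open>\<gamma> < 1\<close> x] h_min_le[OF x0_mem]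
    unfolding mean_gap_def expected_gap_X_0 by (simp add: norm_minus_commute)
  also have "\<dots> \<le> 9 / sqrt (real T) * (L * (norm (x - x0))\<^sup>2
      + 1 / sqrt (real T) * (h x0 - h_min) + \<sigma>2 / L * (1 / real T + 4 * ln (real T + 1)))"
    using tuned_step_size_bound[OF r L _ _ _ \<open>2 / 3 \<le> ln (real T + 1)\<close>, of "(norm (x - x0))\<^sup>2" "h x0 - h_min" \<sigma>2]
      h_min_le[OF x0_mem]
    unfolding tuned_constants by (simp add: \<sigma>2_def)
  finally show ?thesis .
qed

lemma prox_sgd_rate:
  "(\<integral>\<^sup>+w. ennreal (h (psgd (prox C g (1 / (3 * L * sqrt (real T)))) G (1 / (3 * L * sqrt (real T))) x0 w (Suc T))
      - h_min) \<partial>PiM {..T} (\<lambda>_. D))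
    \<le> ennreal (9 / sqrt (real T) * (L * (INF x\<in>{x \<in> C. \<forall>y\<in>C. h x \<le> h y}. (norm (x - x0))\<^sup>2)
        + 1 / sqrt (real T) * (h x0 - h_min) + \<sigma>2 / L * (1 / real T + 4 * ln (real T + 1))))"
proof -
  let ?rest = "9 / sqrt (real T) * (1 / sqrt (real T) * (h x0 - h_min) + \<sigma>2 / L * (1 / real T + 4 * ln (real T + 1)))"
  have "mean_gap (Suc T) \<le> ?rest + 9 / sqrt (real T) * L * (INF x\<in>{x \<in> C. \<forall>y\<in>C. h x \<le> h y}. (norm (x - x0))\<^sup>2)"
  proof (rule le_affine_INF)
    show "{x \<in> C. \<forall>y\<in>C. h x \<le> h y} \<noteq> {}"
      using xs_C h_min_le unfolding h_min_def by blast
    show "9 / sqrt (real T) * L > 0"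
      using T_ge_1 L by simp
    show "mean_gap (Suc T) \<le> ?rest + 9 / sqrt (real T) * L * (norm (x - x0))\<^sup>2"
      if "x \<in> {x \<in> C. \<forall>y\<in>C. h x \<le> h y}" for x
      using mean_gap_last_le[of x] that h_min_le xs_C unfolding h_min_def
      by (auto simp: algebra_simps intro: order_antisym)
  qed
  then show ?thesis
    using expected_gap_eq_mean_gap[of "Suc T"]
    unfolding expected_gap_def X_def by (simp add: algebra_simps ennreal_leI)
qed

end

theorem theorem3p1:
  fixes D :: "'i measure"
    and f :: "'i \<Rightarrow> 'a::euclidean_space \<Rightarrow> real"
    and G :: "'i \<Rightarrow> 'a \<Rightarrow> 'a"
    and C :: "'a set" and g :: "'a \<Rightarrow> real"
    and L :: real and x0 xs :: 'a and T :: nat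
  assumes D: "prob_space D"
    and L: "L > 0"
    and f_convex: "\<And>i. i \<in> space D \<Longrightarrow> convex_on UNIV (f i)"
    and f_grad: "\<And>i x. i \<in> space D \<Longrightarrow> (f i has_derivative (\<lambda>v. G i x \<bullet> v)) (at x)"
    and f_lip: "\<And>i x y. i \<in> space D \<Longrightarrow> norm (G i x - G i y) \<le> L * norm (x - y)"
    and f_int: "\<And>x. integrable D (\<lambda>i. f i x)"
    and G_int: "\<And>x. integrable D (\<lambda>i. G i x)"
    and F_grad: "\<And>x. ((\<lambda>y. \<integral>i. f i y \<partial>D) has_derivative (\<lambda>v. (\<integral>i. G i x \<partial>D) \<bullet> v)) (at x)"
    and C_ne: "C \<noteq> {}" and C_convex: "convex C" and g_convex: "convex_on C g"
    and g_lsc: "closed {(x, t). x \<in> C \<and> g x \<le> t}"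
    and xs_C: "xs \<in> C"
    and xs_min: "\<forall>y\<in>C. (\<integral>i. f i xs \<partial>D) + g xs \<le> (\<integral>i. f i y \<partial>D) + g y"
    and sigma_fin: "integrable D (\<lambda>i. (norm (G i xs))\<^sup>2)"
    and x0_C: "x0 \<in> C"
    and T: "T \<ge> 1"
  shows "(\<integral>\<^sup>+ \<omega>. ennreal
            ((\<integral>i. f i (psgd (prox C g (1 / (3 * L * sqrt (real T)))) G (1 / (3 * L * sqrt (real T))) x0 \<omega> (Suc T)) \<partial>D)
             + g (psgd (prox C g (1 / (3 * L * sqrt (real T)))) G (1 / (3 * L * sqrt (real T))) x0 \<omega> (Suc T))
             - (INF y\<in>C. (\<integral>i. f i y \<partial>D) + g y))
          \<partial>(PiM {..T} (\<lambda>_. D)))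
     \<le> ennreal (9 / sqrt (real T) *
          (L * (INF x\<in>{x \<in> C. \<forall>y\<in>C. (\<integral>i. f i x \<partial>D) + g x \<le> (\<integral>i. f i y \<partial>D) + g y}. (norm (x - x0))\<^sup>2)
           + 1 / sqrt (real T) * ((\<integral>i. f i x0 \<partial>D) + g x0 - (INF y\<in>C. (\<integral>i. f i y \<partial>D) + g y))
           + (\<integral>i. (norm (G i xs))\<^sup>2 \<partial>D) / L * (1 / real T + 4 * ln (real T + 1))))"
proof -
  interpret prox_sgd_tuned D f G C g L xs x0 T
    by (intro prox_sgd_tuned.intro prox_sgd_problem.intro prox_sgd_tuned_axioms.intro) (fact assms)+
  have "(INF y\<in>C. (\<integral>i. f i y \<partial>D) + g y) = h_min"
    unfolding h_min_def h_def F_def using xs_C xs_min by (intro cInf_eq_minimum) auto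
  then show ?thesis
    using prox_sgd_rate unfolding h_def F_def \<sigma>2_def by simp
qed

end
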